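(* Let $p\in(0,1)$ and let $X$, $\gamma$, $(\mathcal Z,\pi)$ satisfy the standing assumptions described in the context. Then: (i) if $\mathrm{ess\text{-}sup}\,\gamma\le \frac1{1-p}$, $\mathrm{ES}_p$ is robust at $X$ relative to $(\mathcal G_{\rm cm},\mathcal Z,\pi)$; (ii) if $0\le x_0<\mathbb E[\gamma X]$ and either $\gamma$ is constant or ($\gamma$ is continuous and $\gamma(X)$ is continuously distributed), then $\mathrm{ES}_p$ is robust at $X$ relative to $(\mathcal G_{\rm ns},L^q,\pi^q)$ for every $q\in[1,\infty]$, where $\pi^q(Y,Z)=\|Y-Z\|_q$; (iii) if $0\le x_0<m$ and either $\gamma$ is constant or ($\gamma$ is continuous and $\gamma(X)$ is continuously distributed), then $\mathrm{ES}_p$ is robust at $X$ relative to $(\mathcal G_{\rm bd},\mathcal Z,\pi)$.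
   Context: $(\Omega,\mathcal F,\mathbb P)$ is an atomless probability space; $L^0$, $L^q$, $L^\infty$ are the usual spaces of a.s. finite, $q$-integrable, essentially bounded random variables. For $p\in(0,1)$, $\mathrm{VaR}_p(Y)=\inf\{x:\mathbb P(Y\le x)\ge p\}$ and $\mathrm{ES}_p(Y)=\frac1{1-p}\int_p^1\mathrm{VaR}_u(Y)\,\mathrm du$ (possibly $+\infty$). Standing assumptions: $X\ge0$ is a random variable whose distribution has a positive density on its support; $\gamma:\mathbb R\to\mathbb R$ is continuous and strictly positive, and (identifying $\gamma$ with $\gamma(X)$) $\mathbb E[\gamma]=1$, $\mathbb E[\gamma X]<\infty$. $(\mathcal Z,\pi)$ is one of: $(L^\infty,\|\cdot-\cdot\|_\infty)$; $(L^q,\|\cdot-\cdot\|_q)$ for $q\in[1,\infty)$; $(L^0,\pi^W)$ with $\pi^W(Y,Z)$ the Prokhorov distance between the laws of $Y,Z$; and $X\in\mathcal Z$. $\mathcal G_1$ is the set of measurable functions $\mathbb R\to\mathbb R$; $x_0\in\mathbb R$, $m>0$; $\mathcal G_{\rm cm}=\{g\in\mathcal G_1:\mathbb E[\gamma g(X)]\ge x_0\}$, $\mathcal G_{\rm ns}=\{g\in\mathcal G_1:\mathbb E[\gamma g(X)]\ge x_0,\ 0\le g(X)\le X\}$, $\mathcal G_{\rm bd}=\{g\in\mathcal G_1:\mathbb E[\gamma g(X)]\ge x_0,\ 0\le g(X)\le m\}$. For an admissible set $\mathcal G$ and objective $\rho$, $\mathcal G_X(\rho)=\{g\in\mathcal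 G:\rho(g(X))=\inf_{h\in\mathcal G}\rho(h(X))\}$. $\rho$ is robust at $X$ relative to $(\mathcal G,\mathcal Z,\pi)$ if there exists $g_X\in\mathcal G_X(\rho)$ such that $\mathcal Z\ni Y\mapsto\rho(g_X(Y))$ is $\pi$-continuous at $Y=X$. *)

theory Defs
  imports "HOL-Probability.Probability" "HOL-Probability.Essential_Supremum"
begin

definition atomless :: "'a measure \<Rightarrow> bool" where
  "atomless M \<longleftrightarrow> (\<forall>A\<in>sets M. measure M A > 0 \<longrightarrow>
      (\<exists>B\<in>sets M. B \<subseteq> A \<and> 0 < measure M B \<and> measure M B < measure M A))"

definition VaR :: "'a measure \<Rightarrow> real \<Rightarrow> ('a \<Rightarrow> real) \<Rightarrow> real" where
  "VaR M u Y = Inf {x::real. measure M {\<omega>\<in>space M. Y \<omega> \<le> x} \<ge> u}"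

text \<open>Expected Shortfall ES_p(Y) = 1/(1-p) * integral over (p,1) of VaR_u(Y) du,
  as an extended real (possibly +\<infinity>); positive and negative parts are integrated
  separately (the negative part is always finite for p in (0,1)).\<close>
definition ES :: "'a measure \<Rightarrow> real \<Rightarrow> ('a \<Rightarrow> real) \<Rightarrow> ereal" where
  "ES M p Y =
     (enn2ereal (\<integral>\<^sup>+ u. indicator {p<..<1} u * ennreal (VaR M u Y) \<partial>lborel)
      - enn2ereal (\<integral>\<^sup>+ u. indicator {p<..<1} u * ennreal (- VaR M u Y) \<partial>lborel))
     / ereal (1 - p)"

definition L0 :: "'a measure \<Rightarrow> ('a \<Rightarrow> real) set" where
  "L0 M = borel_measurable M"

definition Linf :: "'a measure \<Rightarrow> ('a \<Rightarrow> real) set" where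
  "Linf M = {Y \<in> borel_measurable M. \<exists>C. AE \<omega> in M. \<bar>Y \<omega>\<bar> \<le> C}"

definition Lq :: "'a measure \<Rightarrow> real \<Rightarrow> ('a \<Rightarrow> real) set" where
  "Lq M q = {Y \<in> borel_measurable M. integrable M (\<lambda>\<omega>. \<bar>Y \<omega>\<bar> powr q)}"

definition dist_inf :: "'a measure \<Rightarrow> ('a \<Rightarrow> real) \<Rightarrow> ('a \<Rightarrow> real) \<Rightarrow> real" where
  "dist_inf M Y Z = real_of_ereal (esssup M (\<lambda>\<omega>. ereal \<bar>Y \<omega> - Z \<omega>\<bar>))"

definition dist_q :: "'a measure \<Rightarrow> real \<Rightarrow> ('a \<Rightarrow> real) \<Rightarrow> ('a \<Rightarrow> real) \<Rightarrow> real" where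
  "dist_q M q Y Z = (\<integral>\<omega>. \<bar>Y \<omega> - Z \<omega>\<bar> powr q \<partial>M) powr (1 / q)"

definition prokhorov :: "real measure \<Rightarrow> real measure \<Rightarrow> real" where
  "prokhorov \<mu> \<nu> = Inf {\<epsilon>. \<epsilon> > 0 \<and>
      (\<forall>A\<in>sets borel.
         measure \<mu> A \<le> measure \<nu> (\<Union>a\<in>A. ball a \<epsilon>) + \<epsilon> \<and>
         measure \<nu> A \<le> measure \<mu> (\<Union>a\<in>A. ball a \<epsilon>) + \<epsilon>)}"

definition dist_W :: "'a measure \<Rightarrow> ('a \<Rightarrow> real) \<Rightarrow> ('a \<Rightarrow> real) \<Rightarrow> real" where
  "dist_W M Y Z = prokhorov (distr M borel Y) (distr M borel Z)"

definition space_choice :: "'a measure \<Rightarrow> ('a \<Rightarrow> real) set \<Rightarrow>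
    (('a \<Rightarrow> real) \<Rightarrow> ('a \<Rightarrow> real) \<Rightarrow> real) \<Rightarrow> bool" where
  "space_choice M Z \<pi> \<longleftrightarrow>
     (Z = Linf M \<and> \<pi> = dist_inf M)
   \<or> (\<exists>q. 1 \<le> q \<and> Z = Lq M q \<and> \<pi> = dist_q M q)
   \<or> (Z = L0 M \<and> \<pi> = dist_W M)"

definition Lq_choice :: "'a measure \<Rightarrow> ('a \<Rightarrow> real) set \<Rightarrow>
    (('a \<Rightarrow> real) \<Rightarrow> ('a \<Rightarrow> real) \<Rightarrow> real) \<Rightarrow> bool" where
  "Lq_choice M Z \<pi> \<longleftrightarrow>
     (Z = Linf M \<and> \<pi> = dist_inf M)
   \<or> (\<exists>q. 1 \<le> q \<and> Z = Lq M q \<and> \<pi> = dist_q M q)"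

definition G_cm :: "'a measure \<Rightarrow> (real \<Rightarrow> real) \<Rightarrow> ('a \<Rightarrow> real) \<Rightarrow> real \<Rightarrow> (real \<Rightarrow> real) set" where
  "G_cm M \<gamma> X x0 = {g \<in> borel_measurable borel.
      integrable M (\<lambda>\<omega>. \<gamma> (X \<omega>) * g (X \<omega>)) \<and>
      (\<integral>\<omega>. \<gamma> (X \<omega>) * g (X \<omega>) \<partial>M) \<ge> x0}"

definition G_ns :: "'a measure \<Rightarrow> (real \<Rightarrow> real) \<Rightarrow> ('a \<Rightarrow> real) \<Rightarrow> real \<Rightarrow> (real \<Rightarrow> real) set" where
  "G_ns M \<gamma> X x0 = {g \<in> borel_measurable borel.
      integrable M (\<lambda>\<omega>. \<gamma> (X \<omega>) * g (X \<omega>)) \<and>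
      (\<integral>\<omega>. \<gamma> (X \<omega>) * g (X \<omega>) \<partial>M) \<ge> x0 \<and>
      (AE \<omega> in M. 0 \<le> g (X \<omega>) \<and> g (X \<omega>) \<le> X \<omega>)}"

definition G_bd :: "'a measure \<Rightarrow> (real \<Rightarrow> real) \<Rightarrow> ('a \<Rightarrow> real) \<Rightarrow> real \<Rightarrow> real \<Rightarrow> (real \<Rightarrow> real) set" where
  "G_bd M \<gamma> X x0 m = {g \<in> borel_measurable borel.
      integrable M (\<lambda>\<omega>. \<gamma> (X \<omega>) * g (X \<omega>)) \<and>
      (\<integral>\<omega>. \<gamma> (X \<omega>) * g (X \<omega>) \<partial>M) \<ge> x0 \<and>
      (AE \<omega> in M. 0 \<le> g (X \<omega>) \<and> g (X \<omega>) \<le> m)}"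

definition optimal_set :: "(('a \<Rightarrow> real) \<Rightarrow> ereal) \<Rightarrow> (real \<Rightarrow> real) set \<Rightarrow> ('a \<Rightarrow> real)
    \<Rightarrow> (real \<Rightarrow> real) set" where
  "optimal_set \<rho> G X = {g \<in> G. \<rho> (g \<circ> X) = (INF h\<in>G. \<rho> (h \<circ> X))}"

definition cont_at_wrt :: "('b \<Rightarrow> real) set \<Rightarrow> (('b \<Rightarrow> real) \<Rightarrow> ('b \<Rightarrow> real) \<Rightarrow> real)
    \<Rightarrow> (('b \<Rightarrow> real) \<Rightarrow> ereal) \<Rightarrow> ('b \<Rightarrow> real) \<Rightarrow> bool" where
  "cont_at_wrt Z \<pi> F X \<longleftrightarrow>
     (\<forall>S. open S \<and> F X \<in> S \<longrightarrow> (\<exists>\<delta>>0. \<forall>Y\<in>Z. \<pi> Y X < \<delta> \<longrightarrow> F Y \<in> S))"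

definition robust :: "(('a \<Rightarrow> real) \<Rightarrow> ereal) \<Rightarrow> (real \<Rightarrow> real) set \<Rightarrow> ('a \<Rightarrow> real) set
    \<Rightarrow> (('a \<Rightarrow> real) \<Rightarrow> ('a \<Rightarrow> real) \<Rightarrow> real) \<Rightarrow> ('a \<Rightarrow> real) \<Rightarrow> bool" where
  "robust \<rho> G Z \<pi> X \<longleftrightarrow>
     (\<exists>g\<in>optimal_set \<rho> G X. cont_at_wrt Z \<pi> (\<lambda>Y. \<rho> (g \<circ> Y)) X)"

definition law_support :: "'a measure \<Rightarrow> ('a \<Rightarrow> real) \<Rightarrow> real set" where
  "law_support M X = {x. \<forall>e>0. measure M {\<omega>\<in>space M. X \<omega> \<in> ball x e} > 0}"

definition pos_density_on_support :: "'a measure \<Rightarrow> ('a \<Rightarrow> real) \<Rightarrow> bool" where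
  "pos_density_on_support M X \<longleftrightarrow>
     (\<exists>f. distributed M lborel X (\<lambda>x. ennreal (f x)) \<and> (\<forall>x\<in>law_support M X. f x > 0))"

end

theory Submission
  imports Defs
begin

text \<open>
  \<open>ES\<^sub>p(Y)\<close> is the minimum over \<open>t\<close> of the Rockafellar--Uryasev function
  \<open>t + E[(Y - t)\<^sup>+] / (1 - p)\<close>, attained at \<open>t = VaR\<^sub>p(Y)\<close>.

  (i) When \<open>\<gamma> \<le> 1/(1 - p)\<close>, \<open>\<gamma>(X)\<close> is an admissible density in the dual representation of
  \<open>ES\<^sub>p\<close>, so \<open>x\<^sub>0 \<le> E[\<gamma> g(X)] \<le> ES\<^sub>p(g(X))\<close> for every admissible \<open>g\<close>: the constant \<open>x\<^sub>0\<close> is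
  optimal, and \<open>Y \<mapsto> ES\<^sub>p(x\<^sub>0)\<close> is trivially continuous.

  (ii), (iii) With the upper bound \<open>u(x) = x\<close> resp. \<open>u = m\<close>, fix a level \<open>t\<close>. Below \<open>t\<close> the
  payoff \<open>min(u, t)\<close> is free in the Rockafellar--Uryasev function at \<open>t\<close>, and the remaining
  budget is met most cheaply by a fractional knapsack (Neyman--Pearson) layer of the excess
  \<open>(u - t)\<^sup>+\<close> on \<open>{\<gamma> > c}\<close>, or by a fraction \<open>s\<close> of it when \<open>\<gamma>\<close> is constant. Minimising over
  \<open>t\<close> gives an optimal \<open>g = min(u, t) + s (u - t)\<^sup>+ 1{\<gamma> > c}\<close> with \<open>P(\<gamma>(X) = c) = 0\<close>.
  Then \<open>{\<gamma> > c}\<close> is open with \<open>X\<close>-null frontier, so \<open>P(Y \<in> {\<gamma> > c})\<close> depends continuously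
  on \<open>Y\<close> for all the metrics considered. For \<open>u = m\<close>, \<open>g\<close> takes two values and \<open>ES\<^sub>p(g(Y))\<close>
  is an affine function of that probability. For \<open>u(x) = x\<close>, the bound
  \<open>|g(y) - g(x)| \<le> 2|y - x| + |x| 1{mismatch}\<close>, Markov's inequality and the uniform
  integrability of \<open>X\<close> give \<open>g(Y) \<rightarrow> g(X)\<close> in \<open>L\<^sup>1\<close>, and \<open>ES\<^sub>p\<close> is \<open>1/(1 - p)\<close>-Lipschitz in \<open>L\<^sup>1\<close>.
\<close>

section \<open>Expected shortfall as a minimum\<close>

definition rockafellar_uryasev :: "'a measure \<Rightarrow> real \<Rightarrow> ('a \<Rightarrow> real) \<Rightarrow> real \<Rightarrow> real" where
  "rockafellar_uryasev M p Y t = t + (\<integral>\<omega>. max (Y \<omega> - t) 0 \<partial>M) / (1 - p)"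

definition pos_integrable :: "'a measure \<Rightarrow> ('a \<Rightarrow> real) \<Rightarrow> bool" where
  "pos_integrable M Y \<longleftrightarrow> integrable M (\<lambda>\<omega>. max (Y \<omega>) 0)"

lemma ennreal_shift_pos_neg:
  fixes t y :: real
  assumes "t \<le> y"
  shows "ennreal y + ennreal (- t) = ennreal (y - t) + ennreal t + ennreal (- y)"
  using assms
  by (cases "0 \<le> t"; cases "0 \<le> y") (auto simp: ennreal_neg ennreal_plus[symmetric] simp del: ennreal_plus)

lemma ereal_add_cancel_finite:
  fixes x y :: ereal and a b n :: real
  assumes "x + ereal a = y + ereal b + ereal n"
  shows "x - ereal n = y + ereal (b - a)"
  using assms by (cases x; cases y) auto

lemma integrable_abs_le:
  fixes f g :: "'a \<Rightarrow> real"
  assumes "integrable M g" "f \<in> borel_measurable M" "AE x in M. \<bar>f x\<bar> \<le> g x"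
  shows "integrable M f"
  using assms(3) by (intro Bochner_Integration.integrable_bound[OF assms(1,2)]) auto

lemma integrable_mult_dominated:
  fixes G W f :: "'a \<Rightarrow> real"
  assumes G: "G \<in> borel_measurable M" "\<forall>\<omega>\<in>space M. 0 \<le> G \<omega>" and GW: "integrable M (\<lambda>\<omega>. G \<omega> * W \<omega>)"
    and f: "f \<in> borel_measurable M" "AE \<omega> in M. \<bar>f \<omega>\<bar> \<le> W \<omega>"
  shows "integrable M (\<lambda>\<omega>. G \<omega> * f \<omega>)"
proof (rule integrable_abs_le[OF GW])
  show "(\<lambda>\<omega>. G \<omega> * f \<omega>) \<in> borel_measurable M"
    using G(1) f(1) by measurable
  show "AE \<omega> in M. \<bar>G \<omega> * f \<omega>\<bar> \<le> G \<omega> * W \<omega>"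
    using f(2) AE_space
  proof eventually_elim
    case (elim \<omega>)
    then show ?case using G(2) by (simp add: abs_mult mult_left_mono)
  qed
qed

context prob_space
begin

lemma cdf_distr_eq_prob:
  assumes "Y \<in> borel_measurable M"
  shows "cdf (distr M borel Y) x = prob {\<omega>\<in>space M. Y \<omega> \<le> x}"
  using assms by (simp add: cdf_def measure_distr vimage_def Int_def conj_commute)

lemma VaR_eq_Inf_cdf:
  assumes "Y \<in> borel_measurable M"
  shows "VaR M u Y = Inf {x. u \<le> cdf (distr M borel Y) x}"
  unfolding VaR_def cdf_distr_eq_prob[OF assms] ..

lemma VaR_le_iff:
  assumes Y: "Y \<in> borel_measurable M" and u: "0 < u" "u < 1"
  shows "VaR M u Y \<le> x \<longleftrightarrow> u \<le> prob {\<omega>\<in>space M. Y \<omega> \<le> x}"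
proof -
  interpret C: cdf_distribution "distr M borel Y"
    using real_distribution_distr[OF Y] by (simp add: cdf_distribution_def)
  show ?thesis
    using C.pseudoinverse[of u x] u by (simp add: VaR_eq_Inf_cdf[OF Y] cdf_distr_eq_prob[OF Y])
qed

lemma le_prob_le_VaR:
  assumes "Y \<in> borel_measurable M" "0 < p" "p < 1"
  shows "p \<le> prob {\<omega>\<in>space M. Y \<omega> \<le> VaR M p Y}"
  using VaR_le_iff[OF assms, of "VaR M p Y"] by simp

lemma VaR_mono:
  assumes Y: "Y \<in> borel_measurable M" and "0 < u" "u \<le> v" "v < 1"
  shows "VaR M u Y \<le> VaR M v Y"
  using VaR_le_iff[OF Y] le_prob_le_VaR[OF Y, of v] assms by force

lemma prob_less_VaR_le:
  assumes Y: "Y \<in> borel_measurable M" and p: "0 < p" "p < 1"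
  shows "prob {\<omega>\<in>space M. Y \<omega> < VaR M p Y} \<le> p"
proof -
  define A where "A n = {\<omega>\<in>space M. Y \<omega> \<le> VaR M p Y - 1 / Suc n}" for n
  have "incseq A"
  proof (rule incseq_SucI)
    fix n
    have "1 / real (Suc (Suc n)) \<le> 1 / real (Suc n)"
      by (rule divide_left_mono) auto
    then show "A n \<subseteq> A (Suc n)" by (auto simp: A_def)
  qed
  moreover have "range A \<subseteq> events"
    using Y by (auto simp: A_def)
  ultimately have "(\<lambda>n. prob (A n)) \<longlonglongrightarrow> prob (\<Union>n. A n)"
    by (intro finite_Lim_measure_incseq)
  moreover have "prob (A n) \<le> p" for n
    using VaR_le_iff[OF Y p, of "VaR M p Y - 1 / Suc n"] by (auto simp: A_def)
  ultimately have "prob (\<Union>n. A n) \<le> p"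
    by (intro LIMSEQ_le_const2) auto
  moreover have "(\<Union>n. A n) = {\<omega>\<in>space M. Y \<omega> < VaR M p Y}"
  proof (intro set_eqI iffI)
    fix \<omega> assume "\<omega> \<in> {\<omega>\<in>space M. Y \<omega> < VaR M p Y}"
    then obtain n where "1 / real (Suc n) < VaR M p Y - Y \<omega>" "\<omega> \<in> space M"
      by (metis diff_gt_0_iff_gt mem_Collect_eq nat_approx_posE)
    then have "\<omega> \<in> A n" by (auto simp: A_def)
    then show "\<omega> \<in> (\<Union>n. A n)" by blast
  next
    fix \<omega> assume "\<omega> \<in> (\<Union>n. A n)"
    then obtain n where "\<omega> \<in> space M" "Y \<omega> \<le> VaR M p Y - 1 / Suc n"
      by (auto simp: A_def)
    moreover have "VaR M p Y - 1 / Suc n < VaR M p Y" by simp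
    ultimately show "\<omega> \<in> {\<omega>\<in>space M. Y \<omega> < VaR M p Y}"
      by (blast dest: le_less_trans)
  qed
  ultimately show ?thesis by simp
qed

lemma VaR_nonneg:
  assumes Y: "Y \<in> borel_measurable M" and p: "0 < p" "p < 1" and nonneg: "AE \<omega> in M. 0 \<le> Y \<omega>"
  shows "0 \<le> VaR M p Y"
proof (rule ccontr)
  assume "\<not> 0 \<le> VaR M p Y"
  with nonneg have "prob {\<omega>\<in>space M. Y \<omega> \<le> VaR M p Y} = 0"
    by (intro prob_eq_0_AE) auto
  then show False using le_prob_le_VaR[OF Y p] p by simp
qed

lemma borel_measurable_VaR:
  assumes Y: "Y \<in> borel_measurable M"
  shows "(\<lambda>u. indicator {0<..<1::real} u *\<^sub>R VaR M u Y) \<in> borel_measurable borel"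
proof -
  interpret C: cdf_distribution "distr M borel Y"
    using real_distribution_distr[OF Y] by (simp add: cdf_distribution_def)
  have "(\<lambda>u. VaR M u Y) \<in> borel_measurable (restrict_space borel {0<..<1::real})"
    using C.measurable_CI unfolding VaR_eq_Inf_cdf[OF Y] .
  then show ?thesis
    by (subst (asm) borel_measurable_restrict_space_iff) auto
qed

lemma borel_measurable_indicator_VaR:
  fixes f :: "real \<Rightarrow> ennreal"
  assumes Y: "Y \<in> borel_measurable M" and f: "f \<in> borel_measurable borel"
    and A: "A \<in> sets borel" "A \<subseteq> {0<..<1}"
  shows "(\<lambda>u. indicator A u * f (VaR M u Y)) \<in> borel_measurable borel"
proof -
  have "(\<lambda>u. indicator A u * f (VaR M u Y)) =
     (\<lambda>u. indicator A u * f (indicator {0<..<1::real} u *\<^sub>R VaR M u Y))"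
    using A by (auto simp: indicator_def fun_eq_iff)
  then show ?thesis using borel_measurable_VaR[OF Y] f A by simp
qed

text \<open>Quantile transform: under Lebesgue measure on (0,1), u \<mapsto> VaR_u(Y) has the law of Y.\<close>
lemma nn_integral_VaR_eq:
  assumes Y: "Y \<in> borel_measurable M" and f: "f \<in> borel_measurable borel"
  shows "(\<integral>\<^sup>+u. indicator {0<..<1} u * f (VaR M u Y) \<partial>lborel) = (\<integral>\<^sup>+\<omega>. f (Y \<omega>) \<partial>M)"
proof -
  interpret C: cdf_distribution "distr M borel Y"
    using real_distribution_distr[OF Y] by (simp add: cdf_distribution_def)
  let ?I = "\<lambda>\<omega>. Inf {x. \<omega> \<le> cdf (distr M borel Y) x}"
  have "(\<integral>\<^sup>+\<omega>. f (Y \<omega>) \<partial>M) = (\<integral>\<^sup>+x. f x \<partial>distr M borel Y)"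
    using Y f by (simp add: nn_integral_distr)
  also have "\<dots> = (\<integral>\<^sup>+x. f x \<partial>distr (restrict_space lborel {0<..<1::real}) borel ?I)"
    using C.distr_I_eq_M by simp
  also have "\<dots> = (\<integral>\<^sup>+u. f (?I u) \<partial>restrict_space lborel {0<..<1::real})"
    using f C.measurable_CI
    by (subst nn_integral_distr) (auto simp: measurable_restrict_space1)
  also have "\<dots> = (\<integral>\<^sup>+u. indicator {0<..<1} u * f (?I u) \<partial>lborel)"
    by (subst nn_integral_restrict_space) (auto simp: mult.commute nn_integral_set_ennreal)
  finally show ?thesis by (simp add: VaR_eq_Inf_cdf[OF Y])
qed

lemma nn_integral_excess_eq_VaR:
  assumes Y: "Y \<in> borel_measurable M" and p: "0 < p" "p < 1"
  shows "(\<integral>\<^sup>+\<omega>. ennreal (Y \<omega> - VaR M p Y) \<partial>M) =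
    (\<integral>\<^sup>+u. indicator {p<..<1} u * ennreal (VaR M u Y - VaR M p Y) \<partial>lborel)"
proof -
  have "(\<integral>\<^sup>+\<omega>. ennreal (Y \<omega> - VaR M p Y) \<partial>M) =
    (\<integral>\<^sup>+u. indicator {0<..<1} u * ennreal (VaR M u Y - VaR M p Y) \<partial>lborel)"
    by (rule nn_integral_VaR_eq[OF Y, symmetric]) auto
  also have "\<dots> = (\<integral>\<^sup>+u. indicator {p<..<1} u * ennreal (VaR M u Y - VaR M p Y) \<partial>lborel)"
  proof (rule nn_integral_cong)
    fix u :: real
    have "u \<le> p \<Longrightarrow> 0 < u \<Longrightarrow> VaR M u Y \<le> VaR M p Y"
      using VaR_mono[OF Y] p by auto
    then show "indicator {0<..<1} u * ennreal (VaR M u Y - VaR M p Y) =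
        indicator {p<..<1} u * ennreal (VaR M u Y - VaR M p Y)"
      using p by (auto simp: indicator_def ennreal_neg)
  qed
  finally show ?thesis .
qed

lemma ES_eq_excess:
  assumes Y: "Y \<in> borel_measurable M" and p: "0 < p" "p < 1"
  shows "ES M p Y = (enn2ereal (\<integral>\<^sup>+\<omega>. ennreal (Y \<omega> - VaR M p Y) \<partial>M)
      + ereal ((1 - p) * VaR M p Y)) / ereal (1 - p)"
proof -
  define t where "t = VaR M p Y"
  let ?J = "\<lambda>f. \<integral>\<^sup>+u. indicator {p<..<1} u * f u \<partial>lborel"
  have ge: "t \<le> VaR M u Y" if "u \<in> {p<..<1}" for u
    unfolding t_def using VaR_mono[OF Y, of p u] that p by auto
  have meas: "(\<lambda>u. indicator {p<..<1} u * ennreal (f (VaR M u Y))) \<in> borel_measurable borel"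
    if "f \<in> borel_measurable borel" for f :: "real \<Rightarrow> real"
    using that p by (intro borel_measurable_indicator_VaR[OF Y]) auto
  have const: "?J (\<lambda>_. ennreal c) = ennreal ((1 - p) * c)" if "0 \<le> c" for c
    using p that by (simp add: nn_integral_cmult_indicator mult.commute ennreal_mult)
  have add: "?J f + ?J g = ?J (\<lambda>u. f u + g u)"
    if "(\<lambda>u. indicator {p<..<1} u * f u) \<in> borel_measurable borel"
      "(\<lambda>u. indicator {p<..<1} u * g u) \<in> borel_measurable borel" for f g
    using that by (simp add: nn_integral_add distrib_left)
  have "?J (\<lambda>u. ennreal (VaR M u Y)) + ?J (\<lambda>_. ennreal (- t)) =
      ?J (\<lambda>u. ennreal (VaR M u Y) + ennreal (- t))"
    using meas[of "\<lambda>x. x"] by (intro add) auto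
  also have "\<dots> = ?J (\<lambda>u. ennreal (VaR M u Y - t) + ennreal t + ennreal (- VaR M u Y))"
    by (intro nn_integral_cong) (auto simp: indicator_def ennreal_shift_pos_neg ge)
  also have "\<dots> = ?J (\<lambda>u. ennreal (VaR M u Y - t)) + ?J (\<lambda>_. ennreal t) + ?J (\<lambda>u. ennreal (- VaR M u Y))"
    using meas[of "\<lambda>x. x - t"] meas[of uminus]
    by (subst add, measurable, subst add) (auto simp: distrib_left)
  finally have ident: "?J (\<lambda>u. ennreal (VaR M u Y)) + ?J (\<lambda>_. ennreal (- t)) =
      (\<integral>\<^sup>+\<omega>. ennreal (Y \<omega> - t) \<partial>M) + ?J (\<lambda>_. ennreal t) + ?J (\<lambda>u. ennreal (- VaR M u Y))"
    unfolding t_def nn_integral_excess_eq_VaR[OF Y p] .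
  have const: "?J (\<lambda>_. ennreal c) = ennreal ((1 - p) * max c 0)" for c
    using p by (simp add: nn_integral_cmult_indicator mult.commute ennreal_mult max_def ennreal_neg)
  have "?J (\<lambda>u. ennreal (- VaR M u Y)) \<le> ?J (\<lambda>_. ennreal (- t))"
    by (intro nn_integral_mono) (auto simp: indicator_def ge intro!: ennreal_leI)
  then obtain n where n: "?J (\<lambda>u. ennreal (- VaR M u Y)) = ennreal n" "0 \<le> n"
    unfolding const by (cases "?J (\<lambda>u. ennreal (- VaR M u Y))") (auto simp: top_unique)
  from arg_cong[OF ident, of enn2ereal]
  have "enn2ereal (?J (\<lambda>u. ennreal (VaR M u Y))) - ereal n =
      enn2ereal (\<integral>\<^sup>+\<omega>. ennreal (Y \<omega> - t) \<partial>M) + ereal ((1 - p) * max t 0 - (1 - p) * max (- t) 0)"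
    unfolding const n plus_ennreal.rep_eq using p n(2)
    by (intro ereal_add_cancel_finite) (simp add: enn2ereal_ennreal)
  also have "(1 - p) * max t 0 - (1 - p) * max (- t) 0 = (1 - p) * t"
    by (simp add: max_def algebra_simps)
  finally show ?thesis
    unfolding ES_def n using n(2) by (simp add: t_def enn2ereal_ennreal)
qed

lemma integrable_max_diff_shift:
  fixes Y :: "'a \<Rightarrow> real"
  assumes Y: "Y \<in> borel_measurable M" and int: "integrable M (\<lambda>\<omega>. max (Y \<omega> - s) 0)"
  shows "integrable M (\<lambda>\<omega>. max (Y \<omega> - t) 0)"
  by (rule integrable_abs_le[where g="\<lambda>\<omega>. max (Y \<omega> - s) 0 + \<bar>t - s\<bar>"]) (use int Y in \<open>auto simp: max_def\<close>)

lemma pos_integrable_iff: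
  fixes Y :: "'a \<Rightarrow> real"
  assumes "Y \<in> borel_measurable M"
  shows "pos_integrable M Y \<longleftrightarrow> integrable M (\<lambda>\<omega>. max (Y \<omega> - t) 0)"
  using integrable_max_diff_shift[OF assms, of 0 t] integrable_max_diff_shift[OF assms, of t 0]
  unfolding pos_integrable_def by auto

lemma ES_eq_rockafellar_uryasev:
  assumes Y: "Y \<in> borel_measurable M" and p: "0 < p" "p < 1" and pos: "pos_integrable M Y"
  shows "ES M p Y = ereal (rockafellar_uryasev M p Y (VaR M p Y))"
proof -
  let ?t = "VaR M p Y"
  have "integrable M (\<lambda>\<omega>. max (Y \<omega> - ?t) 0)"
    using pos pos_integrable_iff[OF Y] by simp
  then have "(\<integral>\<^sup>+\<omega>. ennreal (Y \<omega> - ?t) \<partial>M) = ennreal (\<integral>\<omega>. max (Y \<omega> - ?t) 0 \<partial>M)"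
    by (subst nn_integral_eq_integral[symmetric]) (auto intro!: nn_integral_cong simp: max_def ennreal_neg)
  moreover have "0 \<le> (\<integral>\<omega>. max (Y \<omega> - ?t) 0 \<partial>M)"
    by (intro integral_nonneg_AE) auto
  ultimately show ?thesis
    using p by (simp add: ES_eq_excess[OF Y p] rockafellar_uryasev_def enn2ereal_ennreal field_simps)
qed

lemma ES_eq_infinity:
  assumes Y: "Y \<in> borel_measurable M" and p: "0 < p" "p < 1" and not_pos: "\<not> pos_integrable M Y"
  shows "ES M p Y = \<infinity>"
proof -
  let ?t = "VaR M p Y"
  have "(\<integral>\<^sup>+\<omega>. ennreal (Y \<omega> - ?t) \<partial>M) = \<top>"
  proof (rule ccontr)
    assume "(\<integral>\<^sup>+\<omega>. ennreal (Y \<omega> - ?t) \<partial>M) \<noteq> \<top>"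
    moreover have "(\<integral>\<^sup>+\<omega>. ennreal (max (Y \<omega> - ?t) 0) \<partial>M) = (\<integral>\<^sup>+\<omega>. ennreal (Y \<omega> - ?t) \<partial>M)"
      by (intro nn_integral_cong) (simp add: max_def ennreal_neg)
    ultimately have "integrable M (\<lambda>\<omega>. max (Y \<omega> - ?t) 0)"
      using Y by (intro integrableI_nonneg) (auto simp: top.not_eq_extremum)
    with not_pos pos_integrable_iff[OF Y] show False by simp
  qed
  then show ?thesis
    using p by (simp add: ES_eq_excess[OF Y p])
qed

lemma excess_VaR_le:
  assumes Y: "Y \<in> borel_measurable M" and p: "0 < p" "p < 1"
    and int: "integrable M (\<lambda>\<omega>. max (Y \<omega> - VaR M p Y) 0)"
  shows "(\<integral>\<omega>. max (Y \<omega> - VaR M p Y) 0 \<partial>M) \<le> (\<integral>\<omega>. max (Y \<omega> - t) 0 \<partial>M) + (t - VaR M p Y) * (1 - p)"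
proof -
  define t0 where "t0 = VaR M p Y"
  have int_t: "integrable M (\<lambda>\<omega>. max (Y \<omega> - t) 0)"
    by (rule integrable_max_diff_shift[OF Y int])
  have ind: "integrable M (\<lambda>\<omega>. f \<omega> + c * indicator {\<omega>\<in>space M. P (Y \<omega>)} \<omega>)"
    if "integrable M f" "Measurable.pred borel P" for f :: "'a \<Rightarrow> real" and c P
  proof -
    have "{\<omega>\<in>space M. P (Y \<omega>)} \<in> events" using that(2) Y by measurable
    then show ?thesis
      using that(1) by (intro Bochner_Integration.integrable_add integrable_mult_right) (auto simp: less_top[symmetric])
  qed
  show ?thesis
  proof (cases "t0 \<le> t")
    case True
    let ?B = "{\<omega>\<in>space M. t0 < Y \<omega>}"
    have "?B = space M - {\<omega>\<in>space M. Y \<omega> \<le> t0}" by auto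
    then have "prob ?B = 1 - prob {\<omega>\<in>space M. Y \<omega> \<le> t0}"
      using prob_compl[of "{\<omega>\<in>space M. Y \<omega> \<le> t0}"] Y by simp
    then have B: "prob ?B \<le> 1 - p" using le_prob_le_VaR[OF Y p] unfolding t0_def by simp
    have "(\<integral>\<omega>. max (Y \<omega> - t0) 0 \<partial>M) \<le> (\<integral>\<omega>. max (Y \<omega> - t) 0 + (t - t0) * indicator ?B \<omega> \<partial>M)"
      using True
      by (intro integral_mono[OF int[folded t0_def]] ind[OF int_t]) (auto simp: indicator_def max_def)
    also have "\<dots> = (\<integral>\<omega>. max (Y \<omega> - t) 0 \<partial>M) + (t - t0) * prob ?B"
      using int_t Y by (subst Bochner_Integration.integral_add) (auto simp: less_top[symmetric])
    also have "\<dots> \<le> (\<integral>\<omega>. max (Y \<omega> - t) 0 \<partial>M) + (t - t0) * (1 - p)"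
      using B True by (simp add: mult_left_mono)
    finally show ?thesis unfolding t0_def .
  next
    case False
    let ?B = "{\<omega>\<in>space M. t0 \<le> Y \<omega>}"
    have "?B = space M - {\<omega>\<in>space M. Y \<omega> < t0}" by auto
    then have "prob ?B = 1 - prob {\<omega>\<in>space M. Y \<omega> < t0}"
      using prob_compl[of "{\<omega>\<in>space M. Y \<omega> < t0}"] Y by simp
    then have B: "1 - p \<le> prob ?B" using prob_less_VaR_le[OF Y p] unfolding t0_def by simp
    have "(\<integral>\<omega>. max (Y \<omega> - t0) 0 \<partial>M) + (t0 - t) * (1 - p) \<le> (\<integral>\<omega>. max (Y \<omega> - t0) 0 \<partial>M) + (t0 - t) * prob ?B"
      using B False by (simp add: mult_left_mono)
    also have "\<dots> = (\<integral>\<omega>. max (Y \<omega> - t0) 0 + (t0 - t) * indicator ?B \<omega> \<partial>M)"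
      using int Y by (subst Bochner_Integration.integral_add) (auto simp: t0_def less_top[symmetric])
    also have "\<dots> \<le> (\<integral>\<omega>. max (Y \<omega> - t) 0 \<partial>M)"
      using False
      by (intro integral_mono[OF ind[OF int[folded t0_def]] int_t]) (auto simp: indicator_def max_def)
    finally show ?thesis unfolding t0_def by (simp add: algebra_simps)
  qed
qed

lemma ES_le_rockafellar_uryasev:
  assumes Y: "Y \<in> borel_measurable M" and p: "0 < p" "p < 1" and pos: "pos_integrable M Y"
  shows "ES M p Y \<le> ereal (rockafellar_uryasev M p Y t)"
proof -
  have "integrable M (\<lambda>\<omega>. max (Y \<omega> - VaR M p Y) 0)"
    using pos pos_integrable_iff[OF Y] by simp
  from divide_right_mono[OF excess_VaR_le[OF Y p this, of t], of "1 - p"] p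
  have "rockafellar_uryasev M p Y (VaR M p Y) \<le> rockafellar_uryasev M p Y t"
    by (simp add: rockafellar_uryasev_def add_divide_distrib)
  then show ?thesis by (simp add: ES_eq_rockafellar_uryasev[OF Y p pos])
qed

lemma ES_le_ES_add:
  assumes A: "A \<in> borel_measurable M" "pos_integrable M A"
    and B: "B \<in> borel_measurable M" "pos_integrable M B" and p: "0 < p" "p < 1"
    and le: "\<And>t. rockafellar_uryasev M p A t \<le> rockafellar_uryasev M p B t + e"
  shows "ES M p A \<le> ES M p B + ereal e"
proof -
  have "ES M p A \<le> ereal (rockafellar_uryasev M p A (VaR M p B))"
    by (rule ES_le_rockafellar_uryasev[OF A(1) p A(2)])
  also have "\<dots> \<le> ereal (rockafellar_uryasev M p B (VaR M p B) + e)"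
    using le by simp
  finally show ?thesis
    using ES_eq_rockafellar_uryasev[OF B(1) p B(2)] by simp
qed

end

section \<open>Robustness with a budget constraint only\<close>

lemma optimal_setI:
  assumes "g \<in> G" "\<And>h. h \<in> G \<Longrightarrow> \<rho> (g \<circ> X) \<le> \<rho> (h \<circ> X)"
  shows "g \<in> optimal_set \<rho> G X"
  unfolding optimal_set_def using assms by (auto intro!: antisym INF_greatest INF_lower)

context prob_space
begin

lemma integral_density_le_rockafellar_uryasev:
  assumes Y: "Y \<in> borel_measurable M" and p: "p < 1" and pos: "pos_integrable M Y"
    and \<xi>: "integrable M \<xi>" "(\<integral>\<omega>. \<xi> \<omega> \<partial>M) = 1" "AE \<omega> in M. 0 \<le> \<xi> \<omega> \<and> \<xi> \<omega> \<le> 1 / (1 - p)"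
    and \<xi>Y: "integrable M (\<lambda>\<omega>. \<xi> \<omega> * Y \<omega>)"
  shows "(\<integral>\<omega>. \<xi> \<omega> * Y \<omega> \<partial>M) \<le> rockafellar_uryasev M p Y t"
proof -
  have excess: "integrable M (\<lambda>\<omega>. max (Y \<omega> - t) 0)"
    using pos pos_integrable_iff[OF Y] by simp
  have "AE \<omega> in M. \<xi> \<omega> * Y \<omega> \<le> t * \<xi> \<omega> + max (Y \<omega> - t) 0 / (1 - p)"
    using \<xi>(3)
  proof eventually_elim
    case (elim \<omega>)
    have "\<xi> \<omega> * (Y \<omega> - t) \<le> \<xi> \<omega> * max (Y \<omega> - t) 0"
      using elim by (intro mult_left_mono) auto
    also have "\<dots> \<le> 1 / (1 - p) * max (Y \<omega> - t) 0"
      using elim by (intro mult_right_mono) auto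
    finally show ?case by (simp add: algebra_simps)
  qed
  then have "(\<integral>\<omega>. \<xi> \<omega> * Y \<omega> \<partial>M) \<le> (\<integral>\<omega>. t * \<xi> \<omega> + max (Y \<omega> - t) 0 / (1 - p) \<partial>M)"
    using \<xi>(1) excess by (intro integral_mono_AE \<xi>Y) auto
  also have "\<dots> = rockafellar_uryasev M p Y t"
    using \<xi>(1,2) excess by (simp add: rockafellar_uryasev_def)
  finally show ?thesis .
qed

text \<open>One half of the dual representation of \<open>ES\<^sub>p\<close>.\<close>
lemma integral_density_le_ES:
  assumes Y: "Y \<in> borel_measurable M" and p: "0 < p" "p < 1"
    and \<xi>: "integrable M \<xi>" "(\<integral>\<omega>. \<xi> \<omega> \<partial>M) = 1" "AE \<omega> in M. 0 \<le> \<xi> \<omega> \<and> \<xi> \<omega> \<le> 1 / (1 - p)"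
    and \<xi>Y: "integrable M (\<lambda>\<omega>. \<xi> \<omega> * Y \<omega>)"
  shows "ereal (\<integral>\<omega>. \<xi> \<omega> * Y \<omega> \<partial>M) \<le> ES M p Y"
proof (cases "pos_integrable M Y")
  case True
  then show ?thesis
    using integral_density_le_rockafellar_uryasev[OF Y p(2) True \<xi> \<xi>Y]
    by (simp add: ES_eq_rockafellar_uryasev[OF Y p True])
qed (simp add: ES_eq_infinity[OF Y p])

lemma ES_const:
  assumes p: "0 < p" "p < 1"
  shows "ES M p (\<lambda>_. c) = ereal c"
proof (rule antisym)
  have "pos_integrable M (\<lambda>_. c)"
    by (simp add: pos_integrable_def)
  from ES_le_rockafellar_uryasev[OF _ p this, of c]
  show "ES M p (\<lambda>_. c) \<le> ereal c"
    by (simp add: rockafellar_uryasev_def)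
  show "ereal c \<le> ES M p (\<lambda>_. c)"
    using integral_density_le_ES[OF _ p, where \<xi>="\<lambda>_. 1" and Y="\<lambda>_. c"] p prob_space by simp
qed

lemma robust_ES_G_cm:
  fixes X :: "'a \<Rightarrow> real" and \<gamma> :: "real \<Rightarrow> real"
  assumes p: "0 < p" "p < 1" and X: "X \<in> borel_measurable M"
    and \<gamma>: "\<gamma> \<in> borel_measurable borel" "\<forall>x. 0 < \<gamma> x"
      "integrable M (\<lambda>\<omega>. \<gamma> (X \<omega>))" "(\<integral>\<omega>. \<gamma> (X \<omega>) \<partial>M) = 1"
    and ess: "esssup M (\<lambda>\<omega>. ereal (\<gamma> (X \<omega>))) \<le> ereal (1 / (1 - p))"
  shows "robust (ES M p) (G_cm M \<gamma> X x0) Z \<pi> X"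
proof -
  have \<gamma>_le: "AE \<omega> in M. 0 \<le> \<gamma> (X \<omega>) \<and> \<gamma> (X \<omega>) \<le> 1 / (1 - p)"
    using esssup_AE[of "\<lambda>\<omega>. ereal (\<gamma> (X \<omega>))" M]
  proof eventually_elim
    case (elim \<omega>)
    then have "ereal (\<gamma> (X \<omega>)) \<le> ereal (1 / (1 - p))"
      using ess by (rule order_trans)
    then show ?case using \<gamma>(2) less_imp_le by auto
  qed
  have const: "(\<lambda>_. x0) \<in> G_cm M \<gamma> X x0"
    using \<gamma>(3,4) by (simp add: G_cm_def)
  have "ES M p ((\<lambda>_. x0) \<circ> X) \<le> ES M p (h \<circ> X)" if "h \<in> G_cm M \<gamma> X x0" for h
  proof -
    have "ereal x0 \<le> ereal (\<integral>\<omega>. \<gamma> (X \<omega>) * (h \<circ> X) \<omega> \<partial>M)"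
      using that by (simp add: G_cm_def)
    also have "\<dots> \<le> ES M p (h \<circ> X)"
      using that X \<gamma> \<gamma>_le by (intro integral_density_le_ES p) (auto simp: G_cm_def)
    finally show ?thesis by (simp add: comp_def ES_const[OF p])
  qed
  then have "(\<lambda>_. x0) \<in> optimal_set (ES M p) (G_cm M \<gamma> X x0) X"
    by (intro optimal_setI const)
  moreover have "cont_at_wrt Z \<pi> (\<lambda>Y. ES M p ((\<lambda>_. x0) \<circ> Y)) X"
    unfolding cont_at_wrt_def comp_def by (auto intro!: exI[of _ 1])
  ultimately show ?thesis
    unfolding robust_def by blast
qed

end

section \<open>Fractional knapsack layers\<close>

definition cheapest_layer :: "'a measure \<Rightarrow> ('a \<Rightarrow> real) \<Rightarrow> ('a \<Rightarrow> real) \<Rightarrow> real \<Rightarrow> real \<Rightarrow> real \<Rightarrow> bool" where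
  "cheapest_layer M G W \<tau> c s \<longleftrightarrow> 0 \<le> c \<and> 0 \<le> s \<and> s \<le> 1 \<and> measure M {\<omega>\<in>space M. G \<omega> = c} = 0 \<and>
     \<tau> \<le> (\<integral>\<omega>. G \<omega> * (s * W \<omega> * indicator {c<..} (G \<omega>)) \<partial>M) \<and>
     (\<forall>W'. W' \<in> borel_measurable M \<longrightarrow> (AE \<omega> in M. 0 \<le> W' \<omega> \<and> W' \<omega> \<le> W \<omega>) \<longrightarrow>
        \<tau> \<le> (\<integral>\<omega>. G \<omega> * W' \<omega> \<partial>M) \<longrightarrow>
        (\<integral>\<omega>. s * W \<omega> * indicator {c<..} (G \<omega>) \<partial>M) \<le> (\<integral>\<omega>. W' \<omega> \<partial>M))"

context prob_space
begin

text \<open>The Neyman--Pearson argument: \<open>(G - c) D \<le> 0\<close>, hence \<open>0 \<le> E[G D] \<le> c E[D]\<close>.\<close>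
lemma integral_nonneg_if_weighted_nonneg:
  fixes G D :: "'a \<Rightarrow> real"
  assumes G: "\<forall>\<omega>\<in>space M. 0 < G \<omega>" and c: "0 \<le> c"
    and D: "integrable M D" "integrable M (\<lambda>\<omega>. G \<omega> * D \<omega>)"
    and sign: "AE \<omega> in M. (c < G \<omega> \<longrightarrow> D \<omega> \<le> 0) \<and> (G \<omega> \<le> c \<longrightarrow> 0 \<le> D \<omega>)"
    and weighted: "0 \<le> (\<integral>\<omega>. G \<omega> * D \<omega> \<partial>M)"
  shows "0 \<le> (\<integral>\<omega>. D \<omega> \<partial>M)"
proof (cases "c = 0")
  case False
  have "(\<integral>\<omega>. G \<omega> * D \<omega> \<partial>M) \<le> (\<integral>\<omega>. c * D \<omega> \<partial>M)"
    using sign D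
  proof (intro integral_mono_AE)
    show "AE \<omega> in M. G \<omega> * D \<omega> \<le> c * D \<omega>"
      using sign by eventually_elim (auto intro: mult_right_mono_neg mult_right_mono)
  qed auto
  with weighted have "0 \<le> c * (\<integral>\<omega>. D \<omega> \<partial>M)"
    by simp
  with c False show ?thesis
    by (simp add: zero_le_mult_iff)
next
  case True
  have nonpos: "AE \<omega> in M. G \<omega> * D \<omega> \<le> 0"
    using sign AE_space by eventually_elim (use G True in \<open>auto simp: mult_nonneg_nonpos\<close>)
  then have "0 \<le> (\<integral>\<omega>. - (G \<omega> * D \<omega>) \<partial>M)"
    by (intro integral_nonneg_AE) auto
  with weighted have "(\<integral>\<omega>. - (G \<omega> * D \<omega>) \<partial>M) = 0"
    by simp
  then have "AE \<omega> in M. - (G \<omega> * D \<omega>) = 0"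
    using nonpos D(2) by (subst (asm) integral_nonneg_eq_0_iff_AE) auto
  then have "AE \<omega> in M. D \<omega> = 0"
    using AE_space by eventually_elim (use G in auto)
  then show ?thesis
    by (simp add: integral_cong_AE[of D _ "\<lambda>_. 0"] borel_measurable_integrable[OF D(1)])
qed

lemma integral_upper_layer_le:
  fixes G W W' :: "'a \<Rightarrow> real"
  assumes G: "G \<in> borel_measurable M" "\<forall>\<omega>\<in>space M. 0 < G \<omega>"
    and W: "W \<in> borel_measurable M" "\<forall>\<omega>\<in>space M. 0 \<le> W \<omega>" "integrable M W" "integrable M (\<lambda>\<omega>. G \<omega> * W \<omega>)"
    and c: "0 \<le> c"
    and W': "W' \<in> borel_measurable M" "AE \<omega> in M. 0 \<le> W' \<omega> \<and> W' \<omega> \<le> W \<omega>"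
    and budget: "(\<integral>\<omega>. G \<omega> * (W \<omega> * indicator {c<..} (G \<omega>)) \<partial>M) \<le> (\<integral>\<omega>. G \<omega> * W' \<omega> \<partial>M)"
  shows "(\<integral>\<omega>. W \<omega> * indicator {c<..} (G \<omega>) \<partial>M) \<le> (\<integral>\<omega>. W' \<omega> \<partial>M)"
proof -
  define L where "L = (\<lambda>\<omega>. W \<omega> * indicator {c<..} (G \<omega>))"
  have L: "L \<in> borel_measurable M" "AE \<omega> in M. \<bar>L \<omega>\<bar> \<le> W \<omega>"
    unfolding L_def using G(1) W(1,2) by (measurable, auto simp: indicator_def intro!: AE_I2)
  have W'_le: "AE \<omega> in M. \<bar>W' \<omega>\<bar> \<le> W \<omega>"
    using W'(2) by eventually_elim auto
  have G0: "\<forall>\<omega>\<in>space M. 0 \<le> G \<omega>"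
    using G(2) less_imp_le by blast
  have int: "integrable M L" "integrable M (\<lambda>\<omega>. G \<omega> * L \<omega>)"
    "integrable M W'" "integrable M (\<lambda>\<omega>. G \<omega> * W' \<omega>)"
    using integrable_abs_le[OF W(3) L] integrable_abs_le[OF W(3) W'(1) W'_le]
      integrable_mult_dominated[OF G(1) G0 W(4) L] integrable_mult_dominated[OF G(1) G0 W(4) W'(1) W'_le]
    by auto
  have "0 \<le> (\<integral>\<omega>. W' \<omega> - L \<omega> \<partial>M)"
  proof (rule integral_nonneg_if_weighted_nonneg[OF G(2) c])
    show "AE \<omega> in M. (c < G \<omega> \<longrightarrow> W' \<omega> - L \<omega> \<le> 0) \<and> (G \<omega> \<le> c \<longrightarrow> 0 \<le> W' \<omega> - L \<omega>)"
      using W'(2) by eventually_elim (auto simp: L_def)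
    show "0 \<le> (\<integral>\<omega>. G \<omega> * (W' \<omega> - L \<omega>) \<partial>M)"
      using budget int by (simp add: right_diff_distrib L_def)
  qed (use int in \<open>auto simp: right_diff_distrib\<close>)
  then show ?thesis
    using Bochner_Integration.integral_diff[OF int(3,1)] by (simp add: L_def)
qed

lemma continuous_on_upper_layer_integral:
  fixes G W :: "'a \<Rightarrow> real"
  assumes G: "G \<in> borel_measurable M" "\<forall>\<omega>\<in>space M. 0 < G \<omega>"
    and W: "W \<in> borel_measurable M" "\<forall>\<omega>\<in>space M. 0 \<le> W \<omega>" "integrable M (\<lambda>\<omega>. G \<omega> * W \<omega>)"
    and no_atoms: "\<forall>c. prob {\<omega>\<in>space M. G \<omega> = c} = 0"
  shows "continuous_on A (\<lambda>c. \<integral>\<omega>. G \<omega> * (W \<omega> * indicator {c<..} (G \<omega>)) \<partial>M)"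
proof (rule continuous_on_sequentiallyI)
  fix u :: "nat \<Rightarrow> real" and a assume u: "u \<longlonglongrightarrow> a"
  have "AE \<omega> in M. G \<omega> \<noteq> a"
    using no_atoms G(1) by (subst AE_iff_measurable[of "{\<omega>\<in>space M. G \<omega> = a}"]) (auto simp: emeasure_eq_measure)
  then have "AE \<omega> in M. (\<lambda>n. G \<omega> * (W \<omega> * indicator {u n<..} (G \<omega>))) \<longlonglongrightarrow> G \<omega> * (W \<omega> * indicator {a<..} (G \<omega>))"
  proof eventually_elim
    case (elim \<omega>)
    have "eventually (\<lambda>n. (u n < G \<omega>) = (a < G \<omega>)) sequentially"
    proof (cases "a < G \<omega>")
      case True
      show ?thesis
        using order_tendstoD(2)[OF u True] by (rule eventually_mono) (simp add: True)
    next
      case False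
      with elim have "G \<omega> < a" by simp
      from order_tendstoD(1)[OF u this] show ?thesis
        by (rule eventually_mono) (use False in auto)
    qed
    then have "eventually (\<lambda>n. G \<omega> * (W \<omega> * indicator {u n<..} (G \<omega>)) =
        G \<omega> * (W \<omega> * indicator {a<..} (G \<omega>))) sequentially"
      by eventually_elim (simp add: indicator_def)
    then show ?case
      by (rule tendsto_eventually)
  qed
  moreover have "AE \<omega> in M. norm (G \<omega> * (W \<omega> * indicator {c<..} (G \<omega>))) \<le> G \<omega> * W \<omega>" for c
    using AE_space by eventually_elim (use G(2) W(2) in \<open>auto simp: indicator_def abs_mult\<close>)
  moreover have "(\<lambda>\<omega>. G \<omega> * (W \<omega> * indicator {c<..} (G \<omega>))) \<in> borel_measurable M" for c
    using G(1) W(1) by measurable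
  ultimately show "(\<lambda>n. \<integral>\<omega>. G \<omega> * (W \<omega> * indicator {u n<..} (G \<omega>)) \<partial>M) \<longlonglongrightarrow>
      (\<integral>\<omega>. G \<omega> * (W \<omega> * indicator {a<..} (G \<omega>)) \<partial>M)"
    using W(3) by (intro integral_dominated_convergence[where w="\<lambda>\<omega>. G \<omega> * W \<omega>"])
qed

lemma upper_layer_integral_tendsto_0:
  fixes G W :: "'a \<Rightarrow> real"
  assumes G: "G \<in> borel_measurable M" "\<forall>\<omega>\<in>space M. 0 < G \<omega>"
    and W: "W \<in> borel_measurable M" "\<forall>\<omega>\<in>space M. 0 \<le> W \<omega>" "integrable M (\<lambda>\<omega>. G \<omega> * W \<omega>)"
  shows "(\<lambda>n. \<integral>\<omega>. G \<omega> * (W \<omega> * indicator {real n<..} (G \<omega>)) \<partial>M) \<longlonglongrightarrow> 0"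
proof -
  have "AE \<omega> in M. (\<lambda>n. G \<omega> * (W \<omega> * indicator {real n<..} (G \<omega>))) \<longlonglongrightarrow> 0"
  proof (rule AE_I2)
    fix \<omega>
    obtain N where "G \<omega> < real N" using reals_Archimedean2 by blast
    then have "eventually (\<lambda>n. G \<omega> * (W \<omega> * indicator {real n<..} (G \<omega>)) = 0) sequentially"
      unfolding eventually_sequentially by (auto simp: indicator_def intro!: exI[of _ N])
    then show "(\<lambda>n. G \<omega> * (W \<omega> * indicator {real n<..} (G \<omega>))) \<longlonglongrightarrow> 0"
      by (rule tendsto_eventually)
  qed
  moreover have "AE \<omega> in M. norm (G \<omega> * (W \<omega> * indicator {c<..} (G \<omega>))) \<le> G \<omega> * W \<omega>" for c
    using AE_space by eventually_elim (use G(2) W(2) in \<open>auto simp: indicator_def abs_mult\<close>)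
  moreover have "(\<lambda>\<omega>. G \<omega> * (W \<omega> * indicator {c<..} (G \<omega>))) \<in> borel_measurable M" for c
    using G(1) W(1) by measurable
  ultimately have "(\<lambda>n. \<integral>\<omega>. G \<omega> * (W \<omega> * indicator {real n<..} (G \<omega>)) \<partial>M) \<longlonglongrightarrow> (\<integral>\<omega>. 0 \<partial>M)"
    using W(3) by (intro integral_dominated_convergence[where w="\<lambda>\<omega>. G \<omega> * W \<omega>"]) auto
  then show ?thesis
    by simp
qed

lemma exists_upper_layer_eq:
  fixes G W :: "'a \<Rightarrow> real"
  assumes G: "G \<in> borel_measurable M" "\<forall>\<omega>\<in>space M. 0 < G \<omega>"
    and W: "W \<in> borel_measurable M" "\<forall>\<omega>\<in>space M. 0 \<le> W \<omega>" "integrable M (\<lambda>\<omega>. G \<omega> * W \<omega>)"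
    and no_atoms: "\<forall>c. prob {\<omega>\<in>space M. G \<omega> = c} = 0"
    and \<tau>: "0 < \<tau>" "\<tau> \<le> (\<integral>\<omega>. G \<omega> * W \<omega> \<partial>M)"
  shows "\<exists>c\<ge>0. (\<integral>\<omega>. G \<omega> * (W \<omega> * indicator {c<..} (G \<omega>)) \<partial>M) = \<tau>"
proof -
  define k where "k c = (\<integral>\<omega>. G \<omega> * (W \<omega> * indicator {c<..} (G \<omega>)) \<partial>M)" for c
  have "k 0 = (\<integral>\<omega>. G \<omega> * W \<omega> \<partial>M)"
    unfolding k_def by (rule Bochner_Integration.integral_cong) (use G(2) in auto)
  moreover obtain N where "k (real N) < \<tau>"
    using order_tendstoD(2)[OF upper_layer_integral_tendsto_0[OF G W] \<tau>(1)]
    by (auto simp: k_def eventually_sequentially)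
  ultimately obtain c where "0 \<le> c" "c \<le> real N" "k c = \<tau>"
    using IVT2'[of k "real N" \<tau> 0] continuous_on_upper_layer_integral[OF G W no_atoms] \<tau>
    by (auto simp: k_def)
  then show ?thesis
    unfolding k_def by blast
qed

lemma cheapest_layer_nonpos_budget:
  assumes "\<forall>\<omega>\<in>space M. 0 < G \<omega>" "\<tau> \<le> 0"
  shows "cheapest_layer M G W \<tau> 0 0"
proof -
  have "{\<omega>\<in>space M. G \<omega> = 0} = {}"
    using assms(1) by force
  then have "prob {\<omega>\<in>space M. G \<omega> = 0} = 0"
    by (simp only: measure_empty)
  then show ?thesis
    using assms(2) by (auto simp: cheapest_layer_def intro!: integral_nonneg_AE elim: eventually_mono)
qed

lemma cheapest_layer_const_weight:
  fixes G W :: "'a \<Rightarrow> real"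
  assumes G: "\<forall>\<omega>\<in>space M. G \<omega> = k" "0 < k"
    and \<tau>: "0 < \<tau>" "\<tau> \<le> (\<integral>\<omega>. G \<omega> * W \<omega> \<partial>M)"
  shows "cheapest_layer M G W \<tau> 0 (\<tau> / (k * (\<integral>\<omega>. W \<omega> \<partial>M)))"
proof -
  define s where "s = \<tau> / (k * (\<integral>\<omega>. W \<omega> \<partial>M))"
  have weighted: "(\<integral>\<omega>. G \<omega> * f \<omega> \<partial>M) = k * (\<integral>\<omega>. f \<omega> \<partial>M)" for f :: "'a \<Rightarrow> real"
    using G(1) by (subst Bochner_Integration.integral_cong[OF refl, where g="\<lambda>\<omega>. k * f \<omega>"]) auto
  have layer: "(\<integral>\<omega>. f \<omega> * indicator {0<..} (G \<omega>) \<partial>M) = (\<integral>\<omega>. f \<omega> \<partial>M)" for f :: "'a \<Rightarrow> real"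
    using G by (intro Bochner_Integration.integral_cong) auto
  have "0 < k * (\<integral>\<omega>. W \<omega> \<partial>M)"
    using \<tau> by (simp add: weighted)
  then have s: "0 \<le> s" "s \<le> 1"
    using \<tau> by (simp_all add: s_def weighted)
  have "k \<noteq> 0" "(\<integral>\<omega>. W \<omega> \<partial>M) \<noteq> 0"
    using \<open>0 < k * (\<integral>\<omega>. W \<omega> \<partial>M)\<close> by auto
  then have s_eq: "k * (s * (\<integral>\<omega>. W \<omega> \<partial>M)) = \<tau>"
    by (simp add: s_def)
  have "{\<omega>\<in>space M. G \<omega> = 0} = {}"
    using G by auto
  then have "prob {\<omega>\<in>space M. G \<omega> = 0} = 0"
    by (simp only: measure_empty)
  then show ?thesis
    unfolding cheapest_layer_def s_def[symmetric]
  proof (intro conjI allI impI s(1,2))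
    show "\<tau> \<le> (\<integral>\<omega>. G \<omega> * (s * W \<omega> * indicator {0<..} (G \<omega>)) \<partial>M)"
      using s_eq by (simp add: weighted layer)
    fix W' assume "\<tau> \<le> (\<integral>\<omega>. G \<omega> * W' \<omega> \<partial>M)"
    then have "k * (s * (\<integral>\<omega>. W \<omega> \<partial>M)) \<le> k * (\<integral>\<omega>. W' \<omega> \<partial>M)"
      using s_eq by (simp add: weighted)
    then show "(\<integral>\<omega>. s * W \<omega> * indicator {0<..} (G \<omega>) \<partial>M) \<le> (\<integral>\<omega>. W' \<omega> \<partial>M)"
      using G(2) by (simp add: layer)
  qed simp_all
qed

lemma cheapest_layer_no_atoms:
  fixes G W :: "'a \<Rightarrow> real"
  assumes G: "G \<in> borel_measurable M" "\<forall>\<omega>\<in>space M. 0 < G \<omega>"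
    and W: "W \<in> borel_measurable M" "\<forall>\<omega>\<in>space M. 0 \<le> W \<omega>" "integrable M W" "integrable M (\<lambda>\<omega>. G \<omega> * W \<omega>)"
    and no_atoms: "\<forall>c. prob {\<omega>\<in>space M. G \<omega> = c} = 0"
    and \<tau>: "0 < \<tau>" "\<tau> \<le> (\<integral>\<omega>. G \<omega> * W \<omega> \<partial>M)"
  shows "\<exists>c. cheapest_layer M G W \<tau> c 1"
proof -
  obtain c where c: "0 \<le> c" "(\<integral>\<omega>. G \<omega> * (W \<omega> * indicator {c<..} (G \<omega>)) \<partial>M) = \<tau>"
    using exists_upper_layer_eq[OF G W(1,2,4) no_atoms \<tau>] by blast
  have "cheapest_layer M G W \<tau> c 1"
    unfolding cheapest_layer_def
  proof (intro conjI allI impI c(1))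
    fix W' assume "W' \<in> borel_measurable M" "AE \<omega> in M. 0 \<le> W' \<omega> \<and> W' \<omega> \<le> W \<omega>"
      "\<tau> \<le> (\<integral>\<omega>. G \<omega> * W' \<omega> \<partial>M)"
    with c show "(\<integral>\<omega>. 1 * W \<omega> * indicator {c<..} (G \<omega>) \<partial>M) \<le> (\<integral>\<omega>. W' \<omega> \<partial>M)"
      using integral_upper_layer_le[OF G W c(1)] by simp
  qed (use c no_atoms in simp_all)
  then show ?thesis ..
qed

lemma exists_cheapest_layer:
  fixes G W :: "'a \<Rightarrow> real"
  assumes G: "G \<in> borel_measurable M" "\<forall>\<omega>\<in>space M. 0 < G \<omega>"
    and W: "W \<in> borel_measurable M" "\<forall>\<omega>\<in>space M. 0 \<le> W \<omega>" "integrable M W" "integrable M (\<lambda>\<omega>. G \<omega> * W \<omega>)"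
    and \<tau>: "\<tau> \<le> (\<integral>\<omega>. G \<omega> * W \<omega> \<partial>M)"
    and G_cases: "(\<exists>k. \<forall>\<omega>\<in>space M. G \<omega> = k) \<or> (\<forall>c. prob {\<omega>\<in>space M. G \<omega> = c} = 0)"
  shows "\<exists>c s. cheapest_layer M G W \<tau> c s"
proof (cases "0 < \<tau>")
  case True
  from G_cases show ?thesis
  proof
    assume "\<exists>k. \<forall>\<omega>\<in>space M. G \<omega> = k"
    then obtain k where k: "\<forall>\<omega>\<in>space M. G \<omega> = k" ..
    obtain \<omega> where "\<omega> \<in> space M"
      using not_empty by blast
    with k G(2) have "0 < k" by auto
    with k True \<tau> show ?thesis
      using cheapest_layer_const_weight by blast
  qed (use cheapest_layer_no_atoms[OF G W _ True \<tau>] in blast)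
next
  case False
  then have "cheapest_layer M G W \<tau> 0 0"
    by (intro cheapest_layer_nonpos_budget G(2)) simp
  then show ?thesis by blast
qed

end

section \<open>Optimal layered payoffs\<close>

lemma exists_min_atLeast_0:
  fixes V :: "real \<Rightarrow> real"
  assumes cont: "continuous_on {0..} V" and ge: "\<And>t. 0 \<le> t \<Longrightarrow> t \<le> V t"
  shows "\<exists>s\<ge>0. \<forall>t\<ge>0. V s \<le> V t"
proof -
  have V0: "0 \<le> V 0" using ge[of 0] by simp
  moreover have "continuous_on {0..V 0} V"
    using cont by (rule continuous_on_subset) auto
  ultimately obtain s where s: "s \<in> {0..V 0}" "\<forall>t\<in>{0..V 0}. V s \<le> V t"
    using continuous_attains_inf[of "{0..V 0}" V] by auto
  have "V s \<le> V t" if "0 \<le> t" for t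
  proof (cases "t \<le> V 0")
    case False
    have "V s \<le> V 0" using s(2) V0 by auto
    then show ?thesis using False ge[OF that] by linarith
  qed (use s that in auto)
  with s(1) show ?thesis by auto
qed

context prob_space
begin

lemma rockafellar_uryasev_le_add_abs:
  fixes Y :: "'a \<Rightarrow> real"
  assumes Y: "Y \<in> borel_measurable M" and p: "p < 1" and int: "integrable M (\<lambda>\<omega>. max (Y \<omega> - t) 0)"
  shows "rockafellar_uryasev M p Y t' \<le> rockafellar_uryasev M p Y t + (1 + 1 / (1 - p)) * \<bar>t' - t\<bar>"
proof -
  have "(\<integral>\<omega>. max (Y \<omega> - t') 0 \<partial>M) \<le> (\<integral>\<omega>. max (Y \<omega> - t) 0 + \<bar>t' - t\<bar> \<partial>M)"
    using int by (intro integral_mono integrable_max_diff_shift[OF Y int]) (auto simp: max_def)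
  also have "\<dots> = (\<integral>\<omega>. max (Y \<omega> - t) 0 \<partial>M) + \<bar>t' - t\<bar>"
    using int prob_space by simp
  finally have "(\<integral>\<omega>. max (Y \<omega> - t') 0 \<partial>M) / (1 - p) \<le> (\<integral>\<omega>. max (Y \<omega> - t) 0 \<partial>M) / (1 - p) + \<bar>t' - t\<bar> / (1 - p)"
    using p by (simp add: add_divide_distrib[symmetric] divide_right_mono)
  moreover have "t' \<le> t + \<bar>t' - t\<bar>" by simp
  ultimately show ?thesis
    by (simp add: rockafellar_uryasev_def algebra_simps)
qed

text \<open>\<open>V t\<close> is Lipschitz in \<open>t\<close> because each \<open>g t\<close> is also admissible at every other level.\<close>
lemma exists_min_levelwise_value:
  fixes X :: "'a \<Rightarrow> real" and g :: "real \<Rightarrow> real \<Rightarrow> real"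
  assumes p: "p < 1"
    and G: "\<And>h. h \<in> G \<Longrightarrow> h \<circ> X \<in> borel_measurable M \<and> pos_integrable M (h \<circ> X)"
    and g: "\<And>t. 0 \<le> t \<Longrightarrow> g t \<in> G"
    and g_min: "\<And>t h. 0 \<le> t \<Longrightarrow> h \<in> G \<Longrightarrow>
      rockafellar_uryasev M p (g t \<circ> X) t \<le> rockafellar_uryasev M p (h \<circ> X) t"
  defines "V t \<equiv> rockafellar_uryasev M p (g t \<circ> X) t"
  shows "\<exists>s\<ge>0. \<forall>t\<ge>0. V s \<le> V t"
proof -
  define C where "C = 1 + 1 / (1 - p)"
  have V_le: "V t' \<le> V t + C * \<bar>t' - t\<bar>" if "0 \<le> t" "0 \<le> t'" for t t'
  proof -
    have "V t' \<le> rockafellar_uryasev M p (g t \<circ> X) t'"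
      unfolding V_def using that by (intro g_min g)
    also have "\<dots> \<le> V t + C * \<bar>t' - t\<bar>"
      unfolding V_def C_def using G[OF g[OF that(1)]] pos_integrable_iff[of "g t \<circ> X" t] p
      by (intro rockafellar_uryasev_le_add_abs) blast+
    finally show ?thesis .
  qed
  have "C-lipschitz_on {0..} V"
  proof (rule lipschitz_onI)
    fix t t' :: real assume "t \<in> {0..}" "t' \<in> {0..}"
    with V_le[of t t'] V_le[of t' t] show "dist (V t) (V t') \<le> C * dist t t'"
      by (auto simp: dist_real_def abs_minus_commute)
  qed (use p in \<open>simp add: C_def\<close>)
  moreover have "t \<le> V t" for t
  proof -
    have "0 \<le> (\<integral>\<omega>. max ((g t \<circ> X) \<omega> - t) 0 \<partial>M)"
      by (intro integral_nonneg_AE) auto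
    with p show ?thesis by (simp add: V_def rockafellar_uryasev_def)
  qed
  ultimately show ?thesis
    using exists_min_atLeast_0[OF lipschitz_on_continuous_on] by blast
qed

text \<open>The minimiser of the level value beats every \<open>h\<close> at the level \<open>VaR\<^sub>p(h(X)) \<ge> 0\<close>.\<close>
lemma optimal_of_levelwise_minimisers:
  fixes X :: "'a \<Rightarrow> real" and g :: "real \<Rightarrow> real \<Rightarrow> real"
  assumes p: "0 < p" "p < 1"
    and G: "\<And>h. h \<in> G \<Longrightarrow> h \<circ> X \<in> borel_measurable M \<and> pos_integrable M (h \<circ> X) \<and> (AE \<omega> in M. 0 \<le> h (X \<omega>))"
    and g: "\<And>t. 0 \<le> t \<Longrightarrow> g t \<in> G"
    and g_min: "\<And>t h. 0 \<le> t \<Longrightarrow> h \<in> G \<Longrightarrow>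
      rockafellar_uryasev M p (g t \<circ> X) t \<le> rockafellar_uryasev M p (h \<circ> X) t"
  shows "\<exists>t\<ge>0. g t \<in> optimal_set (ES M p) G X"
proof -
  obtain s where s: "0 \<le> s" "\<And>t. 0 \<le> t \<Longrightarrow>
      rockafellar_uryasev M p (g s \<circ> X) s \<le> rockafellar_uryasev M p (g t \<circ> X) t"
    using exists_min_levelwise_value[OF p(2) _ g g_min] G by blast
  have "ES M p (g s \<circ> X) \<le> ES M p (h \<circ> X)" if h: "h \<in> G" for h
  proof -
    have "0 \<le> VaR M p (h \<circ> X)"
      using G[OF h] p by (intro VaR_nonneg) auto
    then have min: "rockafellar_uryasev M p (g s \<circ> X) s \<le> rockafellar_uryasev M p (h \<circ> X) (VaR M p (h \<circ> X))"
      using s(2) g_min[OF _ h] order_trans by blast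
    have "ES M p (g s \<circ> X) \<le> ereal (rockafellar_uryasev M p (g s \<circ> X) s)"
      using G[OF g[OF s(1)]] p by (intro ES_le_rockafellar_uryasev) auto
    also have "\<dots> \<le> ereal (rockafellar_uryasev M p (h \<circ> X) (VaR M p (h \<circ> X)))"
      using min by simp
    also have "\<dots> = ES M p (h \<circ> X)"
      using G[OF h] p by (intro ES_eq_rockafellar_uryasev[symmetric]) auto
    finally show ?thesis .
  qed
  then have "g s \<in> optimal_set (ES M p) G X"
    by (intro optimal_setI g s(1))
  with s(1) show ?thesis by blast
qed

end

definition G_between :: "'a measure \<Rightarrow> (real \<Rightarrow> real) \<Rightarrow> ('a \<Rightarrow> real) \<Rightarrow> real \<Rightarrow> (real \<Rightarrow> real) \<Rightarrow> (real \<Rightarrow> real) set" where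
  "G_between M \<gamma> X x0 u = {g \<in> borel_measurable borel. integrable M (\<lambda>\<omega>. \<gamma> (X \<omega>) * g (X \<omega>)) \<and>
      x0 \<le> (\<integral>\<omega>. \<gamma> (X \<omega>) * g (X \<omega>) \<partial>M) \<and> (AE \<omega> in M. 0 \<le> g (X \<omega>) \<and> g (X \<omega>) \<le> u (X \<omega>))}"

definition layered :: "(real \<Rightarrow> real) \<Rightarrow> (real \<Rightarrow> real) \<Rightarrow> real \<Rightarrow> real \<Rightarrow> real \<Rightarrow> real \<Rightarrow> real" where
  "layered u \<gamma> t c s x = min (u x) t + s * max (u x - t) 0 * indicator {c<..} (\<gamma> x)"

lemma G_ns_eq_G_between: "G_ns M \<gamma> X x0 = G_between M \<gamma> X x0 (\<lambda>x. x)"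
  unfolding G_ns_def G_between_def by simp

lemma G_bd_eq_G_between: "G_bd M \<gamma> X x0 m = G_between M \<gamma> X x0 (\<lambda>_. m)"
  unfolding G_bd_def G_between_def by simp

lemma scaled_indicator_bounds:
  fixes a s :: real
  assumes "0 \<le> a" "0 \<le> s" "s \<le> 1"
  shows "0 \<le> s * a * indicator A z" "s * a * indicator A z \<le> a"
  using assms mult_left_le_one_le[of a s] by (auto simp: indicator_def)

lemma layered_bounds:
  assumes t: "0 \<le> t" and s: "0 \<le> s" "s \<le> 1" and u: "0 \<le> u x"
  shows "0 \<le> layered u \<gamma> t c s x" "layered u \<gamma> t c s x \<le> u x"
    "max (layered u \<gamma> t c s x - t) 0 = s * max (u x - t) 0 * indicator {c<..} (\<gamma> x)"
proof -
  define L where "L = s * max (u x - t) 0 * indicator {c<..} (\<gamma> x)"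
  have L: "0 \<le> L" "L \<le> max (u x - t) 0"
    unfolding L_def using scaled_indicator_bounds[of "max (u x - t) 0" s] s by auto
  have "layered u \<gamma> t c s x = min (u x) t + L"
    by (simp add: layered_def L_def)
  with L t u show "0 \<le> layered u \<gamma> t c s x" "layered u \<gamma> t c s x \<le> u x"
    "max (layered u \<gamma> t c s x - t) 0 = L"
    by (auto simp: max_def min_def)
qed

context prob_space
begin

lemma layered_in_G_between:
  fixes X :: "'a \<Rightarrow> real" and \<gamma> u :: "real \<Rightarrow> real"
  assumes X: "X \<in> borel_measurable M" and \<gamma>: "\<gamma> \<in> borel_measurable borel" "\<forall>x. 0 < \<gamma> x"
    and u: "u \<in> borel_measurable borel" "\<forall>\<omega>\<in>space M. 0 \<le> u (X \<omega>)" "integrable M (\<lambda>\<omega>. \<gamma> (X \<omega>) * u (X \<omega>))"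
    and t: "0 \<le> t"
    and layer: "cheapest_layer M (\<lambda>\<omega>. \<gamma> (X \<omega>)) (\<lambda>\<omega>. max (u (X \<omega>) - t) 0)
      (x0 - (\<integral>\<omega>. \<gamma> (X \<omega>) * min (u (X \<omega>)) t \<partial>M)) c s"
  shows "layered u \<gamma> t c s \<in> G_between M \<gamma> X x0 u"
proof -
  let ?L = "\<lambda>\<omega>. s * max (u (X \<omega>) - t) 0 * indicator {c<..} (\<gamma> (X \<omega>))"
  have s: "0 \<le> s" "s \<le> 1" using layer by (auto simp: cheapest_layer_def)
  have \<gamma>X: "(\<lambda>\<omega>. \<gamma> (X \<omega>)) \<in> borel_measurable M" "\<forall>\<omega>\<in>space M. 0 \<le> \<gamma> (X \<omega>)"
    using X \<gamma> less_imp_le by auto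
  have int: "integrable M (\<lambda>\<omega>. \<gamma> (X \<omega>) * f \<omega>)"
    if "f \<in> borel_measurable M" "\<forall>\<omega>\<in>space M. 0 \<le> f \<omega> \<and> f \<omega> \<le> u (X \<omega>)" for f
    using that by (intro integrable_mult_dominated[OF \<gamma>X u(3)]) (auto intro!: AE_I2)
  have int_min: "integrable M (\<lambda>\<omega>. \<gamma> (X \<omega>) * min (u (X \<omega>)) t)"
    using u(2) t X u(1) by (intro int) auto
  have int_L: "integrable M (\<lambda>\<omega>. \<gamma> (X \<omega>) * ?L \<omega>)"
  proof (intro int ballI)
    fix \<omega> assume "\<omega> \<in> space M"
    then have "max (u (X \<omega>) - t) 0 \<le> u (X \<omega>)"
      using u(2) t by auto
    moreover have "0 \<le> ?L \<omega>" "?L \<omega> \<le> max (u (X \<omega>) - t) 0"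
      using scaled_indicator_bounds[of "max (u (X \<omega>) - t) 0" s] s by auto
    ultimately show "0 \<le> ?L \<omega> \<and> ?L \<omega> \<le> u (X \<omega>)"
      by (blast intro: order_trans)
  qed (use X u(1) \<gamma> in measurable)
  have eq: "(\<lambda>\<omega>. \<gamma> (X \<omega>) * layered u \<gamma> t c s (X \<omega>)) =
      (\<lambda>\<omega>. \<gamma> (X \<omega>) * min (u (X \<omega>)) t + \<gamma> (X \<omega>) * ?L \<omega>)"
    by (simp add: layered_def algebra_simps)
  have "x0 \<le> (\<integral>\<omega>. \<gamma> (X \<omega>) * min (u (X \<omega>)) t \<partial>M) + (\<integral>\<omega>. \<gamma> (X \<omega>) * ?L \<omega> \<partial>M)"
    using layer by (simp add: cheapest_layer_def)
  then have "x0 \<le> (\<integral>\<omega>. \<gamma> (X \<omega>) * layered u \<gamma> t c s (X \<omega>) \<partial>M)"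
    "integrable M (\<lambda>\<omega>. \<gamma> (X \<omega>) * layered u \<gamma> t c s (X \<omega>))"
    unfolding eq using int_min int_L by simp_all
  moreover have "\<forall>\<omega>\<in>space M. 0 \<le> layered u \<gamma> t c s (X \<omega>) \<and> layered u \<gamma> t c s (X \<omega>) \<le> u (X \<omega>)"
    using layered_bounds[OF t s] u(2) by blast
  moreover have "layered u \<gamma> t c s \<in> borel_measurable borel"
    unfolding layered_def using u(1) \<gamma>(1) by measurable
  ultimately show ?thesis
    unfolding G_between_def by (auto intro!: AE_I2)
qed

lemma rockafellar_uryasev_layered_le:
  fixes X :: "'a \<Rightarrow> real" and \<gamma> u :: "real \<Rightarrow> real"
  assumes p: "p < 1" and X: "X \<in> borel_measurable M" and \<gamma>: "\<gamma> \<in> borel_measurable borel" "\<forall>x. 0 < \<gamma> x"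
    and u: "u \<in> borel_measurable borel" "\<forall>\<omega>\<in>space M. 0 \<le> u (X \<omega>)" "integrable M (\<lambda>\<omega>. \<gamma> (X \<omega>) * u (X \<omega>))"
    and t: "0 \<le> t"
    and layer: "cheapest_layer M (\<lambda>\<omega>. \<gamma> (X \<omega>)) (\<lambda>\<omega>. max (u (X \<omega>) - t) 0)
      (x0 - (\<integral>\<omega>. \<gamma> (X \<omega>) * min (u (X \<omega>)) t \<partial>M)) c s"
    and h: "h \<in> G_between M \<gamma> X x0 u"
  shows "rockafellar_uryasev M p (layered u \<gamma> t c s \<circ> X) t \<le> rockafellar_uryasev M p (h \<circ> X) t"
proof -
  let ?L = "\<lambda>\<omega>. s * max (u (X \<omega>) - t) 0 * indicator {c<..} (\<gamma> (X \<omega>))"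
  define W' where "W' = (\<lambda>\<omega>. max (h (X \<omega>) - t) 0)"
  have s: "0 \<le> s" "s \<le> 1" using layer by (auto simp: cheapest_layer_def)
  have h_meas: "h \<in> borel_measurable borel" and h_int: "integrable M (\<lambda>\<omega>. \<gamma> (X \<omega>) * h (X \<omega>))"
    and h_budget: "x0 \<le> (\<integral>\<omega>. \<gamma> (X \<omega>) * h (X \<omega>) \<partial>M)"
    and h_le: "AE \<omega> in M. 0 \<le> h (X \<omega>) \<and> h (X \<omega>) \<le> u (X \<omega>)"
    using h by (auto simp: G_between_def)
  have \<gamma>X: "(\<lambda>\<omega>. \<gamma> (X \<omega>)) \<in> borel_measurable M" "\<forall>\<omega>\<in>space M. 0 \<le> \<gamma> (X \<omega>)"
    using X \<gamma> less_imp_le by auto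
  have int: "integrable M (\<lambda>\<omega>. \<gamma> (X \<omega>) * f \<omega>)"
    if "f \<in> borel_measurable M" "AE \<omega> in M. 0 \<le> f \<omega> \<and> f \<omega> \<le> u (X \<omega>)" for f
    using that(2) by (intro integrable_mult_dominated[OF \<gamma>X u(3) that(1)]) (auto elim: eventually_mono)
  have W': "W' \<in> borel_measurable M" "AE \<omega> in M. 0 \<le> W' \<omega> \<and> W' \<omega> \<le> max (u (X \<omega>) - t) 0"
    unfolding W'_def using h_le h_meas X by (measurable, auto simp: max_def elim: eventually_mono)
  have int_min: "integrable M (\<lambda>\<omega>. \<gamma> (X \<omega>) * min (f \<omega>) t)"
    if "f \<in> borel_measurable M" "AE \<omega> in M. 0 \<le> f \<omega> \<and> f \<omega> \<le> u (X \<omega>)" for f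
    using that t by (intro int) (auto elim: eventually_mono)
  have "(\<lambda>\<omega>. \<gamma> (X \<omega>) * h (X \<omega>)) = (\<lambda>\<omega>. \<gamma> (X \<omega>) * min (h (X \<omega>)) t + \<gamma> (X \<omega>) * W' \<omega>)"
    by (auto simp: W'_def min_def max_def algebra_simps)
  with h_budget have "x0 \<le> (\<integral>\<omega>. \<gamma> (X \<omega>) * min (h (X \<omega>)) t + \<gamma> (X \<omega>) * W' \<omega> \<partial>M)"
    by simp
  also have "\<dots> = (\<integral>\<omega>. \<gamma> (X \<omega>) * min (h (X \<omega>)) t \<partial>M) + (\<integral>\<omega>. \<gamma> (X \<omega>) * W' \<omega> \<partial>M)"
    using h_le h_meas X W' t
    by (intro Bochner_Integration.integral_add int_min int) (auto elim: eventually_mono simp: max_def)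
  also have "(\<integral>\<omega>. \<gamma> (X \<omega>) * min (h (X \<omega>)) t \<partial>M) \<le> (\<integral>\<omega>. \<gamma> (X \<omega>) * min (u (X \<omega>)) t \<partial>M)"
  proof (intro integral_mono_AE int_min)
    show "AE \<omega> in M. \<gamma> (X \<omega>) * min (h (X \<omega>)) t \<le> \<gamma> (X \<omega>) * min (u (X \<omega>)) t"
      using h_le AE_space by eventually_elim (use \<gamma>X(2) in \<open>auto intro!: mult_left_mono\<close>)
  qed (use h_le h_meas X u(1,2) in \<open>auto elim: eventually_mono\<close>)
  finally have "(\<integral>\<omega>. ?L \<omega> \<partial>M) \<le> (\<integral>\<omega>. W' \<omega> \<partial>M)"
    using layer W' by (auto simp: cheapest_layer_def)
  moreover have "(\<integral>\<omega>. max ((layered u \<gamma> t c s \<circ> X) \<omega> - t) 0 \<partial>M) = (\<integral>\<omega>. ?L \<omega> \<partial>M)"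
    using layered_bounds(3)[OF t s] u(2) by (intro Bochner_Integration.integral_cong) auto
  ultimately show ?thesis
    using p by (simp add: rockafellar_uryasev_def W'_def divide_right_mono)
qed

lemma exists_cheapest_layer_at_level:
  fixes X :: "'a \<Rightarrow> real" and \<gamma> u :: "real \<Rightarrow> real"
  assumes X: "X \<in> borel_measurable M" and \<gamma>: "\<gamma> \<in> borel_measurable borel" "\<forall>x. 0 < \<gamma> x"
    and u: "u \<in> borel_measurable borel" "\<forall>\<omega>\<in>space M. 0 \<le> u (X \<omega>)" "integrable M (\<lambda>\<omega>. u (X \<omega>))"
      "integrable M (\<lambda>\<omega>. \<gamma> (X \<omega>) * u (X \<omega>))"
    and x0: "x0 \<le> (\<integral>\<omega>. \<gamma> (X \<omega>) * u (X \<omega>) \<partial>M)"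
    and \<gamma>_cases: "(\<forall>x y. \<gamma> x = \<gamma> y) \<or> (\<forall>c. prob {\<omega>\<in>space M. \<gamma> (X \<omega>) = c} = 0)"
    and t: "0 \<le> t"
  shows "\<exists>c s. cheapest_layer M (\<lambda>\<omega>. \<gamma> (X \<omega>)) (\<lambda>\<omega>. max (u (X \<omega>) - t) 0)
    (x0 - (\<integral>\<omega>. \<gamma> (X \<omega>) * min (u (X \<omega>)) t \<partial>M)) c s"
proof -
  let ?W = "\<lambda>\<omega>. max (u (X \<omega>) - t) 0"
  have \<gamma>X: "(\<lambda>\<omega>. \<gamma> (X \<omega>)) \<in> borel_measurable M" "\<forall>\<omega>\<in>space M. 0 \<le> \<gamma> (X \<omega>)"
    using X \<gamma> less_imp_le by auto
  have int: "integrable M (\<lambda>\<omega>. \<gamma> (X \<omega>) * f \<omega>)"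
    if "f \<in> borel_measurable M" "\<forall>\<omega>\<in>space M. 0 \<le> f \<omega> \<and> f \<omega> \<le> u (X \<omega>)" for f
    using that by (intro integrable_mult_dominated[OF \<gamma>X u(4)]) (auto intro!: AE_I2)
  have meas: "(\<lambda>\<omega>. min (u (X \<omega>)) t) \<in> borel_measurable M" "?W \<in> borel_measurable M"
    using X u(1) by simp_all
  show ?thesis
  proof (rule exists_cheapest_layer[OF \<gamma>X(1) _ meas(2)])
    have "(\<integral>\<omega>. \<gamma> (X \<omega>) * u (X \<omega>) \<partial>M) = (\<integral>\<omega>. \<gamma> (X \<omega>) * min (u (X \<omega>)) t + \<gamma> (X \<omega>) * ?W \<omega> \<partial>M)"
      by (intro Bochner_Integration.integral_cong) (auto simp: min_def max_def algebra_simps)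
    also have "\<dots> = (\<integral>\<omega>. \<gamma> (X \<omega>) * min (u (X \<omega>)) t \<partial>M) + (\<integral>\<omega>. \<gamma> (X \<omega>) * ?W \<omega> \<partial>M)"
      using u(2) t by (intro Bochner_Integration.integral_add int meas) auto
    finally show "x0 - (\<integral>\<omega>. \<gamma> (X \<omega>) * min (u (X \<omega>)) t \<partial>M) \<le> (\<integral>\<omega>. \<gamma> (X \<omega>) * ?W \<omega> \<partial>M)"
      using x0 by simp
    show "integrable M ?W"
      using u(2) t by (intro integrable_abs_le[OF u(3) meas(2)] AE_I2) auto
    show "integrable M (\<lambda>\<omega>. \<gamma> (X \<omega>) * ?W \<omega>)"
      using u(2) t by (intro int meas) auto
    show "(\<exists>k. \<forall>\<omega>\<in>space M. \<gamma> (X \<omega>) = k) \<or> (\<forall>c. prob {\<omega>\<in>space M. \<gamma> (X \<omega>) = c} = 0)"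
      using \<gamma>_cases by blast
  qed (use \<gamma>(2) in auto)
qed

lemma G_between_pos_integrable:
  fixes X :: "'a \<Rightarrow> real"
  assumes X: "X \<in> borel_measurable M" and h: "h \<in> G_between M \<gamma> X x0 u"
    and u: "integrable M (\<lambda>\<omega>. u (X \<omega>))"
  shows "h \<circ> X \<in> borel_measurable M" "pos_integrable M (h \<circ> X)" "AE \<omega> in M. 0 \<le> h (X \<omega>)"
proof -
  have h_meas: "h \<in> borel_measurable borel" and h_le: "AE \<omega> in M. 0 \<le> h (X \<omega>) \<and> h (X \<omega>) \<le> u (X \<omega>)"
    using h by (auto simp: G_between_def)
  show "h \<circ> X \<in> borel_measurable M"
    using measurable_comp[OF X h_meas] .
  show "pos_integrable M (h \<circ> X)"
    unfolding pos_integrable_def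
  proof (rule integrable_abs_le[OF u])
    show "(\<lambda>\<omega>. max ((h \<circ> X) \<omega>) 0) \<in> borel_measurable M"
      using X h_meas by measurable
    show "AE \<omega> in M. \<bar>max ((h \<circ> X) \<omega>) 0\<bar> \<le> u (X \<omega>)"
      using h_le by eventually_elim auto
  qed
  show "AE \<omega> in M. 0 \<le> h (X \<omega>)"
    using h_le by eventually_elim simp
qed

lemma exists_optimal_layered:
  fixes X :: "'a \<Rightarrow> real" and \<gamma> u :: "real \<Rightarrow> real"
  assumes p: "0 < p" "p < 1" and X: "X \<in> borel_measurable M"
    and \<gamma>: "\<gamma> \<in> borel_measurable borel" "\<forall>x. 0 < \<gamma> x"
    and u: "u \<in> borel_measurable borel" "\<forall>\<omega>\<in>space M. 0 \<le> u (X \<omega>)" "integrable M (\<lambda>\<omega>. u (X \<omega>))"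
      "integrable M (\<lambda>\<omega>. \<gamma> (X \<omega>) * u (X \<omega>))"
    and x0: "x0 \<le> (\<integral>\<omega>. \<gamma> (X \<omega>) * u (X \<omega>) \<partial>M)"
    and \<gamma>_cases: "(\<forall>x y. \<gamma> x = \<gamma> y) \<or> (\<forall>c. prob {\<omega>\<in>space M. \<gamma> (X \<omega>) = c} = 0)"
  shows "\<exists>t c s. 0 \<le> t \<and> 0 \<le> s \<and> s \<le> 1 \<and> prob {\<omega>\<in>space M. \<gamma> (X \<omega>) = c} = 0 \<and>
    layered u \<gamma> t c s \<in> optimal_set (ES M p) (G_between M \<gamma> X x0 u) X"
proof -
  obtain c s where cs: "\<And>t. 0 \<le> t \<Longrightarrow> cheapest_layer M (\<lambda>\<omega>. \<gamma> (X \<omega>)) (\<lambda>\<omega>. max (u (X \<omega>) - t) 0)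
      (x0 - (\<integral>\<omega>. \<gamma> (X \<omega>) * min (u (X \<omega>)) t \<partial>M)) (c t) (s t)"
    using exists_cheapest_layer_at_level[OF X \<gamma> u x0 \<gamma>_cases] by metis
  have "\<exists>t\<ge>0. layered u \<gamma> t (c t) (s t) \<in> optimal_set (ES M p) (G_between M \<gamma> X x0 u) X"
  proof (rule optimal_of_levelwise_minimisers[OF p])
    fix t :: real and h assume t: "0 \<le> t" and h: "h \<in> G_between M \<gamma> X x0 u"
    show "rockafellar_uryasev M p (layered u \<gamma> t (c t) (s t) \<circ> X) t \<le> rockafellar_uryasev M p (h \<circ> X) t"
      by (rule rockafellar_uryasev_layered_le[OF p(2) X \<gamma> u(1,2,4) t cs[OF t] h])
  qed (use G_between_pos_integrable[OF X _ u(3)] layered_in_G_between[OF X \<gamma> u(1,2,4) _ cs] in blast)+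
  then obtain t where t: "0 \<le> t" "layered u \<gamma> t (c t) (s t) \<in> optimal_set (ES M p) (G_between M \<gamma> X x0 u) X"
    by blast
  moreover have "0 \<le> s t" "s t \<le> 1" "prob {\<omega>\<in>space M. \<gamma> (X \<omega>) = c t} = 0"
    using cs[OF t(1)] by (simp_all add: cheapest_layer_def)
  ultimately show ?thesis
    by blast
qed

end

section \<open>Probabilities of open sets with null frontier\<close>

definition thickening :: "real set \<Rightarrow> real \<Rightarrow> real set" where
  "thickening A e = (\<Union>a\<in>A. ball a e)"

lemma open_thickening: "open (thickening A e)"
  unfolding thickening_def by auto

lemma thickening_mono: "e \<le> e' \<Longrightarrow> thickening A e \<subseteq> thickening A e'"
  unfolding thickening_def by auto

lemma subset_thickening: "0 < e \<Longrightarrow> A \<subseteq> thickening A e"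
  unfolding thickening_def by force

lemma Inter_thickening_eq_closure: "(\<Inter>n. thickening A (1 / Suc n)) = closure A"
proof (intro set_eqI iffI)
  fix x assume x: "x \<in> (\<Inter>n. thickening A (1 / Suc n))"
  show "x \<in> closure A"
    unfolding closure_approachable
  proof (intro allI impI)
    fix e :: real assume "0 < e"
    then obtain n where n: "1 / real (Suc n) < e" using nat_approx_posE by blast
    from x obtain y where "y \<in> A" "dist y x < 1 / Suc n"
      by (auto simp: thickening_def dist_commute)
    with n show "\<exists>y\<in>A. dist y x < e" by force
  qed
next
  fix x assume "x \<in> closure A"
  then have "\<exists>y\<in>A. dist y x < 1 / Suc n" for n
    unfolding closure_approachable by simp
  then show "x \<in> (\<Inter>n. thickening A (1 / Suc n))"
    by (force simp: thickening_def dist_commute)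
qed

lemma cont_at_wrt_ereal_realI:
  assumes FX: "F X = ereal r"
    and close: "\<And>e. 0 < e \<Longrightarrow> \<exists>\<delta>>0. \<forall>Y\<in>Z. \<pi> Y X < \<delta> \<longrightarrow> (\<exists>y. F Y = ereal y \<and> \<bar>y - r\<bar> < e)"
  shows "cont_at_wrt Z \<pi> F X"
  unfolding cont_at_wrt_def
proof (intro allI impI)
  fix S assume S: "open S \<and> F X \<in> S"
  then have "open (ereal -` S)" "r \<in> ereal -` S"
    using FX by (auto simp: open_ereal_vimage)
  then obtain e where e: "0 < e" "\<And>y. dist y r < e \<Longrightarrow> y \<in> ereal -` S"
    unfolding open_dist by blast
  obtain \<delta> where "0 < \<delta>" "\<forall>Y\<in>Z. \<pi> Y X < \<delta> \<longrightarrow> (\<exists>y. F Y = ereal y \<and> \<bar>y - r\<bar> < e)"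
    using close[OF e(1)] by blast
  with e(2) show "\<exists>\<delta>>0. \<forall>Y\<in>Z. \<pi> Y X < \<delta> \<longrightarrow> F Y \<in> S"
    by (force simp: dist_real_def)
qed

context prob_space
begin

lemma Collect_in_events:
  assumes "X \<in> borel_measurable M" "S \<in> sets borel"
  shows "{\<omega>\<in>space M. X \<omega> \<in> S} \<in> events"
  using measurable_sets[OF assms] by (simp add: vimage_def Int_def conj_commute)

lemma prob_thickening_le:
  fixes X :: "'a \<Rightarrow> real"
  assumes X: "X \<in> borel_measurable M" and \<eta>: "0 < \<eta>"
  shows "\<exists>\<epsilon>>0. prob {\<omega>\<in>space M. X \<omega> \<in> thickening A \<epsilon>} \<le> prob {\<omega>\<in>space M. X \<omega> \<in> closure A} + \<eta>"
proof -
  define B where "B n = {\<omega>\<in>space M. X \<omega> \<in> thickening A (1 / Suc n)}" for n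
  have "range B \<subseteq> events"
    unfolding B_def using Collect_in_events[OF X] open_thickening by auto
  moreover have "decseq B"
  proof (rule decseq_SucI)
    fix n
    have "1 / real (Suc (Suc n)) \<le> 1 / real (Suc n)" by (rule divide_left_mono) auto
    then show "B (Suc n) \<subseteq> B n" unfolding B_def using thickening_mono by blast
  qed
  ultimately have "(\<lambda>n. prob (B n)) \<longlonglongrightarrow> prob (\<Inter>n. B n)"
    by (rule finite_Lim_measure_decseq)
  moreover have "(\<Inter>n. B n) = {\<omega>\<in>space M. X \<omega> \<in> closure A}"
    using Inter_thickening_eq_closure[of A] by (auto simp: B_def)
  ultimately have "eventually (\<lambda>n. prob (B n) < prob {\<omega>\<in>space M. X \<omega> \<in> closure A} + \<eta>) sequentially"
    using \<eta> by (intro order_tendstoD(2)) auto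
  then obtain n where "prob (B n) < prob {\<omega>\<in>space M. X \<omega> \<in> closure A} + \<eta>"
    by (auto simp: eventually_sequentially)
  then show ?thesis
    unfolding B_def by (intro exI[of _ "1 / Suc n"]) auto
qed

lemma prob_thickening_le_null_frontier:
  fixes X :: "'a \<Rightarrow> real"
  assumes X: "X \<in> borel_measurable M" and Op: "open Op"
    and null: "prob {\<omega>\<in>space M. X \<omega> \<in> frontier Op} = 0" and \<eta>: "0 < \<eta>"
  shows "\<exists>\<epsilon>>0. prob {\<omega>\<in>space M. X \<omega> \<in> thickening Op \<epsilon>} \<le> prob {\<omega>\<in>space M. X \<omega> \<in> Op} + \<eta> \<and>
     prob {\<omega>\<in>space M. X \<omega> \<in> thickening (- Op) \<epsilon>} \<le> prob {\<omega>\<in>space M. X \<omega> \<in> - Op} + \<eta>"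
proof -
  have prob_closure: "prob {\<omega>\<in>space M. X \<omega> \<in> closure Op} = prob {\<omega>\<in>space M. X \<omega> \<in> Op}"
  proof -
    have "{\<omega>\<in>space M. X \<omega> \<in> closure Op} = {\<omega>\<in>space M. X \<omega> \<in> Op} \<union> {\<omega>\<in>space M. X \<omega> \<in> frontier Op}"
      using Op closure_Un_frontier[of Op] by (auto simp: interior_open)
    moreover have "prob ({\<omega>\<in>space M. X \<omega> \<in> Op} \<union> {\<omega>\<in>space M. X \<omega> \<in> frontier Op}) \<le>
        prob {\<omega>\<in>space M. X \<omega> \<in> Op} + prob {\<omega>\<in>space M. X \<omega> \<in> frontier Op}"
      using Op by (intro measure_Un_le Collect_in_events[OF X]) auto
    ultimately have "prob {\<omega>\<in>space M. X \<omega> \<in> closure Op} \<le> prob {\<omega>\<in>space M. X \<omega> \<in> Op}"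
      using null by simp
    moreover have "prob {\<omega>\<in>space M. X \<omega> \<in> Op} \<le> prob {\<omega>\<in>space M. X \<omega> \<in> closure Op}"
      by (rule finite_measure_mono) (use closure_subset Collect_in_events[OF X] in auto)
    ultimately show ?thesis by simp
  qed
  obtain e1 where e1: "0 < e1" "prob {\<omega>\<in>space M. X \<omega> \<in> thickening Op e1} \<le> prob {\<omega>\<in>space M. X \<omega> \<in> Op} + \<eta>"
    using prob_thickening_le[OF X \<eta>, of Op] prob_closure by auto
  obtain e2 where e2: "0 < e2" "prob {\<omega>\<in>space M. X \<omega> \<in> thickening (- Op) e2} \<le> prob {\<omega>\<in>space M. X \<omega> \<in> - Op} + \<eta>"
    using prob_thickening_le[OF X \<eta>, of "- Op"] Op closure_closed[of "- Op"] by (auto simp: closed_def)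
  have mono: "prob {\<omega>\<in>space M. X \<omega> \<in> thickening A (min e1 e2)} \<le> prob {\<omega>\<in>space M. X \<omega> \<in> thickening A e}"
    if "min e1 e2 \<le> e" for A e
    using thickening_mono[OF that, of A]
    by (intro finite_measure_mono Collect_in_events[OF X] borel_open[OF open_thickening]) auto
  show ?thesis
    using mono[of e1 Op] mono[of e2 "- Op"] e1 e2 by (intro exI[of _ "min e1 e2"]) auto
qed

lemma superlevel_open_null_frontier:
  fixes X :: "'a \<Rightarrow> real" and \<gamma> :: "real \<Rightarrow> real"
  assumes X: "X \<in> borel_measurable M" and \<gamma>: "continuous_on UNIV \<gamma>"
    and null: "prob {\<omega>\<in>space M. \<gamma> (X \<omega>) = c} = 0"
  shows "open {x. c < \<gamma> x}" "prob {\<omega>\<in>space M. X \<omega> \<in> frontier {x. c < \<gamma> x}} = 0"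
proof -
  show "open {x. c < \<gamma> x}"
    using open_vimage[OF open_greaterThan \<gamma>] by (simp add: vimage_def)
  moreover have "closed {x. c \<le> \<gamma> x}"
    using closed_vimage[OF closed_atLeast \<gamma>] by (simp add: vimage_def)
  then have "closure {x. c < \<gamma> x} \<subseteq> {x. c \<le> \<gamma> x}"
    by (intro closure_minimal) auto
  ultimately have "frontier {x. c < \<gamma> x} \<subseteq> {x. \<gamma> x = c}"
    by (auto simp: frontier_def interior_open)
  then have "{\<omega>\<in>space M. X \<omega> \<in> frontier {x. c < \<gamma> x}} \<subseteq> {\<omega>\<in>space M. \<gamma> (X \<omega>) = c}"
    by blast
  moreover have "{\<omega>\<in>space M. \<gamma> (X \<omega>) = c} \<in> events"
    using X borel_measurable_continuous_onI[OF \<gamma>] by measurable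
  ultimately have "prob {\<omega>\<in>space M. X \<omega> \<in> frontier {x. c < \<gamma> x}} \<le> prob {\<omega>\<in>space M. \<gamma> (X \<omega>) = c}"
    by (rule finite_measure_mono)
  with null show "prob {\<omega>\<in>space M. X \<omega> \<in> frontier {x. c < \<gamma> x}} = 0"
    by (simp add: measure_le_0_iff)
qed

end

section \<open>Closeness in the metrics of the standing assumptions\<close>

definition L1_close_at :: "'a measure \<Rightarrow> ('a \<Rightarrow> real) set \<Rightarrow> (('a \<Rightarrow> real) \<Rightarrow> ('a \<Rightarrow> real) \<Rightarrow> real) \<Rightarrow> ('a \<Rightarrow> real) \<Rightarrow> bool" where
  "L1_close_at M Z \<pi> X \<longleftrightarrow> (\<forall>e>0. \<exists>\<delta>>0. \<forall>Y\<in>Z. \<pi> Y X < \<delta> \<longrightarrow>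
     Y \<in> borel_measurable M \<and> integrable M (\<lambda>\<omega>. \<bar>Y \<omega> - X \<omega>\<bar>) \<and> (\<integral>\<omega>. \<bar>Y \<omega> - X \<omega>\<bar> \<partial>M) \<le> e)"

definition prob_close_at :: "'a measure \<Rightarrow> ('a \<Rightarrow> real) set \<Rightarrow> (('a \<Rightarrow> real) \<Rightarrow> ('a \<Rightarrow> real) \<Rightarrow> real) \<Rightarrow> ('a \<Rightarrow> real) \<Rightarrow> real set \<Rightarrow> bool" where
  "prob_close_at M Z \<pi> X A \<longleftrightarrow> (\<forall>\<eta>>0. \<exists>\<delta>>0. \<forall>Y\<in>Z. \<pi> Y X < \<delta> \<longrightarrow>
     Y \<in> borel_measurable M \<and> \<bar>measure M {\<omega>\<in>space M. Y \<omega> \<in> A} - measure M {\<omega>\<in>space M. X \<omega> \<in> A}\<bar> \<le> \<eta>)"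

lemma le_add_powr:
  fixes d \<epsilon> q :: real
  assumes d: "0 \<le> d" and \<epsilon>: "0 < \<epsilon>" and q: "1 \<le> q"
  shows "d \<le> \<epsilon> + \<epsilon> powr (1 - q) * d powr q"
proof (cases "d \<le> \<epsilon>")
  case False
  have "d = d * (\<epsilon> powr (1 - q) * \<epsilon> powr (q - 1))"
    using \<epsilon> by (simp add: powr_add[symmetric])
  also have "\<dots> \<le> d * (\<epsilon> powr (1 - q) * d powr (q - 1))"
    using False d q \<epsilon> by (intro mult_left_mono mult_left_mono powr_mono2) auto
  also have "\<dots> = \<epsilon> powr (1 - q) * d powr q"
    using False \<epsilon> by (simp add: powr_diff)
  finally show ?thesis using \<epsilon> by simp
qed (simp add: add_increasing2)

lemma abs_diff_powr_le:
  fixes x y q :: real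
  assumes q: "1 \<le> q"
  shows "\<bar>y - x\<bar> powr q \<le> 2 powr q * (\<bar>y\<bar> powr q + \<bar>x\<bar> powr q)"
proof -
  have "\<bar>y - x\<bar> powr q \<le> (2 * max \<bar>y\<bar> \<bar>x\<bar>) powr q"
    using q by (intro powr_mono2) (auto simp: max_def)
  also have "\<dots> = 2 powr q * max \<bar>y\<bar> \<bar>x\<bar> powr q" by (simp add: powr_mult)
  also have "max \<bar>y\<bar> \<bar>x\<bar> powr q \<le> \<bar>y\<bar> powr q + \<bar>x\<bar> powr q" by (auto simp: max_def)
  finally show ?thesis by simp
qed

lemma abs_le_1_add_powr:
  fixes d q :: real
  assumes q: "1 \<le> q"
  shows "\<bar>d\<bar> \<le> 1 + \<bar>d\<bar> powr q"
proof (cases "\<bar>d\<bar> \<le> 1")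
  case False
  then have "\<bar>d\<bar> powr 1 \<le> \<bar>d\<bar> powr q" by (intro powr_mono) (use q in auto)
  then show ?thesis by simp
qed (simp add: add_increasing2)

context prob_space
begin

lemma integrable_if_Linf:
  assumes "X \<in> Linf M"
  shows "integrable M X"
proof -
  obtain C where C: "X \<in> borel_measurable M" "AE \<omega> in M. \<bar>X \<omega>\<bar> \<le> C"
    using assms unfolding Linf_def by auto
  show ?thesis by (rule integrable_abs_le[where g="\<lambda>_. C"]) (use C in auto)
qed

lemma integrable_if_Lq:
  assumes "X \<in> Lq M q" "1 \<le> q"
  shows "integrable M X"
  by (rule integrable_abs_le[where g="\<lambda>\<omega>. 1 + \<bar>X \<omega>\<bar> powr q"])
    (use assms abs_le_1_add_powr[OF assms(2)] in \<open>auto simp: Lq_def\<close>)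

lemma L1_close_at_Linf:
  assumes X: "X \<in> Linf M"
  shows "L1_close_at M (Linf M) (dist_inf M) X"
  unfolding L1_close_at_def
proof (intro allI impI)
  fix e :: real assume e: "0 < e"
  have "Y \<in> borel_measurable M \<and> integrable M (\<lambda>\<omega>. \<bar>Y \<omega> - X \<omega>\<bar>) \<and> (\<integral>\<omega>. \<bar>Y \<omega> - X \<omega>\<bar> \<partial>M) \<le> e"
    if Y: "Y \<in> Linf M" and dist: "dist_inf M Y X < e" for Y
  proof -
    obtain C1 C2 where Y_meas: "Y \<in> borel_measurable M" and C1: "AE \<omega> in M. \<bar>Y \<omega>\<bar> \<le> C1"
      and X_meas: "X \<in> borel_measurable M" and C2: "AE \<omega> in M. \<bar>X \<omega>\<bar> \<le> C2"
      using X Y unfolding Linf_def by auto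
    define E where "E = esssup M (\<lambda>\<omega>. ereal \<bar>Y \<omega> - X \<omega>\<bar>)"
    have AE_E: "AE \<omega> in M. ereal \<bar>Y \<omega> - X \<omega>\<bar> \<le> E"
      unfolding E_def by (rule esssup_AE)
    have "(\<lambda>\<omega>. ereal \<bar>Y \<omega> - X \<omega>\<bar>) \<in> borel_measurable M"
      using X_meas Y_meas by measurable
    then have "E \<le> ereal (C1 + C2)"
      unfolding E_def by (rule esssup_I) (use C1 C2 in \<open>eventually_elim, auto\<close>)
    moreover have "E \<noteq> - \<infinity>"
    proof
      assume "E = - \<infinity>"
      with AE_E have "AE \<omega> in M. False" by simp
      then show False by simp
    qed
    ultimately obtain r where r: "E = ereal r" by (cases E) auto
    then have bound: "AE \<omega> in M. \<bar>Y \<omega> - X \<omega>\<bar> \<le> r" using AE_E by simp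
    have int: "integrable M (\<lambda>\<omega>. \<bar>Y \<omega> - X \<omega>\<bar>)"
      by (rule integrable_abs_le[where g="\<lambda>_. r"]) (use X_meas Y_meas bound in auto)
    have "(\<integral>\<omega>. \<bar>Y \<omega> - X \<omega>\<bar> \<partial>M) \<le> (\<integral>\<omega>. r \<partial>M)"
      using bound int by (intro integral_mono_AE) auto
    also have "\<dots> < e" using dist r prob_space by (simp add: dist_inf_def E_def[symmetric])
    finally show ?thesis using Y_meas int by simp
  qed
  with e show "\<exists>\<delta>>0. \<forall>Y\<in>Linf M. dist_inf M Y X < \<delta> \<longrightarrow> Y \<in> borel_measurable M \<and>
      integrable M (\<lambda>\<omega>. \<bar>Y \<omega> - X \<omega>\<bar>) \<and> (\<integral>\<omega>. \<bar>Y \<omega> - X \<omega>\<bar> \<partial>M) \<le> e"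
    by blast
qed

lemma L1_close_at_Lq:
  assumes X: "X \<in> Lq M q" and q: "1 \<le> q"
  shows "L1_close_at M (Lq M q) (dist_q M q) X"
  unfolding L1_close_at_def
proof (intro allI impI)
  fix e :: real assume e: "0 < e"
  define \<epsilon> where "\<epsilon> = e / 2"
  define K where "K = e / 2 * \<epsilon> powr (q - 1)"
  have \<epsilon>: "0 < \<epsilon>" and K: "0 < K"
    using e by (simp_all add: \<epsilon>_def K_def)
  have "\<epsilon> powr (1 - q) * K = e / 2 * (\<epsilon> powr (1 - q) * \<epsilon> powr (q - 1))"
    by (simp add: K_def)
  also have "\<epsilon> powr (1 - q) * \<epsilon> powr (q - 1) = 1"
    using \<epsilon> by (simp add: powr_add[symmetric])
  finally have \<epsilon>K: "\<epsilon> + \<epsilon> powr (1 - q) * K = e"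
    by (simp add: \<epsilon>_def)
  have "Y \<in> borel_measurable M \<and> integrable M (\<lambda>\<omega>. \<bar>Y \<omega> - X \<omega>\<bar>) \<and> (\<integral>\<omega>. \<bar>Y \<omega> - X \<omega>\<bar> \<partial>M) \<le> e"
    if Y: "Y \<in> Lq M q" and dist: "dist_q M q Y X < K powr (1 / q)" for Y
  proof -
    have X_meas: "X \<in> borel_measurable M" and Y_meas: "Y \<in> borel_measurable M"
      using X Y by (auto simp: Lq_def)
    have int_q: "integrable M (\<lambda>\<omega>. \<bar>Y \<omega> - X \<omega>\<bar> powr q)"
      by (rule integrable_abs_le[where g="\<lambda>\<omega>. 2 powr q * (\<bar>Y \<omega>\<bar> powr q + \<bar>X \<omega>\<bar> powr q)"])
        (use X Y abs_diff_powr_le[OF q] in \<open>auto simp: Lq_def\<close>)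
    define I where "I = (\<integral>\<omega>. \<bar>Y \<omega> - X \<omega>\<bar> powr q \<partial>M)"
    have "0 \<le> I" unfolding I_def by (rule integral_nonneg_AE) auto
    have less: "I powr (1 / q) < K powr (1 / q)"
      using dist unfolding dist_q_def I_def .
    have "(I powr (1 / q)) powr q < (K powr (1 / q)) powr q"
      by (rule powr_less_mono2) (use q less in auto)
    with \<open>0 \<le> I\<close> K q have IK: "I < K"
      by (simp add: powr_powr)
    have int: "integrable M (\<lambda>\<omega>. \<bar>Y \<omega> - X \<omega>\<bar>)"
      by (rule integrable_abs_le[where g="\<lambda>\<omega>. 1 + \<bar>Y \<omega> - X \<omega>\<bar> powr q"])
        (use X_meas Y_meas int_q abs_le_1_add_powr[OF q] in auto)
    have "(\<integral>\<omega>. \<bar>Y \<omega> - X \<omega>\<bar> \<partial>M) \<le> (\<integral>\<omega>. \<epsilon> + \<epsilon> powr (1 - q) * \<bar>Y \<omega> - X \<omega>\<bar> powr q \<partial>M)"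
      using int_q le_add_powr[OF _ \<epsilon> q] by (intro integral_mono[OF int]) auto
    also have "\<dots> = \<epsilon> + \<epsilon> powr (1 - q) * I"
      unfolding I_def using int_q prob_space by simp
    also have "\<dots> \<le> e"
      using mult_left_mono[of I K "\<epsilon> powr (1 - q)"] IK \<epsilon>K by simp
    finally show ?thesis using Y_meas int by simp
  qed
  moreover have "0 < K powr (1 / q)" using K by simp
  ultimately show "\<exists>\<delta>>0. \<forall>Y\<in>Lq M q. dist_q M q Y X < \<delta> \<longrightarrow> Y \<in> borel_measurable M \<and>
      integrable M (\<lambda>\<omega>. \<bar>Y \<omega> - X \<omega>\<bar>) \<and> (\<integral>\<omega>. \<bar>Y \<omega> - X \<omega>\<bar> \<partial>M) \<le> e"
    by blast
qed

lemma L1_close_at_if_Lq_choice: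
  assumes "Lq_choice M Z \<pi>" "X \<in> Z"
  shows "integrable M X" "L1_close_at M Z \<pi> X"
  using assms integrable_if_Linf integrable_if_Lq L1_close_at_Linf L1_close_at_Lq
  unfolding Lq_choice_def by blast+

lemma abs_prob_diff_le_mismatch:
  fixes X Y :: "'a \<Rightarrow> real"
  assumes X: "X \<in> borel_measurable M" and Y: "Y \<in> borel_measurable M" and A: "A \<in> sets borel"
  shows "\<bar>prob {\<omega>\<in>space M. Y \<omega> \<in> A} - prob {\<omega>\<in>space M. X \<omega> \<in> A}\<bar> \<le>
    prob {\<omega>\<in>space M. (Y \<omega> \<in> A) \<noteq> (X \<omega> \<in> A)}"
proof -
  have le: "prob {\<omega>\<in>space M. V \<omega> \<in> A} \<le> prob {\<omega>\<in>space M. W \<omega> \<in> A} + prob {\<omega>\<in>space M. (Y \<omega> \<in> A) \<noteq> (X \<omega> \<in> A)}"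
    if "V \<in> borel_measurable M" "W \<in> borel_measurable M" "{V, W} = {X, Y}" for V W
  proof -
    have events: "{\<omega>\<in>space M. V \<omega> \<in> A} \<in> events" "{\<omega>\<in>space M. W \<omega> \<in> A} \<in> events"
      "{\<omega>\<in>space M. (Y \<omega> \<in> A) \<noteq> (X \<omega> \<in> A)} \<in> events"
      using that X Y A by (auto intro!: Collect_in_events pred_intros_logic)
    have "prob {\<omega>\<in>space M. V \<omega> \<in> A} \<le> prob ({\<omega>\<in>space M. W \<omega> \<in> A} \<union> {\<omega>\<in>space M. (Y \<omega> \<in> A) \<noteq> (X \<omega> \<in> A)})"
      using events that(3) by (intro finite_measure_mono) (auto simp: doubleton_eq_iff)
    also have "\<dots> \<le> prob {\<omega>\<in>space M. W \<omega> \<in> A} + prob {\<omega>\<in>space M. (Y \<omega> \<in> A) \<noteq> (X \<omega> \<in> A)}"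
      using events by (intro measure_Un_le) auto
    finally show ?thesis .
  qed
  show ?thesis
    using le[OF X Y] le[OF Y X] by (auto simp: insert_commute)
qed

lemma prob_mismatch_le:
  fixes X Y :: "'a \<Rightarrow> real"
  assumes X: "X \<in> borel_measurable M" and Y: "Y \<in> borel_measurable M" and Op: "open Op" and e: "0 < e"
    and thick: "prob {\<omega>\<in>space M. X \<omega> \<in> thickening Op e} \<le> prob {\<omega>\<in>space M. X \<omega> \<in> Op} + \<eta>"
      "prob {\<omega>\<in>space M. X \<omega> \<in> thickening (- Op) e} \<le> prob {\<omega>\<in>space M. X \<omega> \<in> - Op} + \<eta>"
  shows "prob {\<omega>\<in>space M. (Y \<omega> \<in> Op) \<noteq> (X \<omega> \<in> Op)} \<le> prob {\<omega>\<in>space M. e \<le> \<bar>Y \<omega> - X \<omega>\<bar>} + 2 * \<eta>"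
proof -
  define E where "E = {\<omega>\<in>space M. e \<le> \<bar>Y \<omega> - X \<omega>\<bar>}"
  define D where "D A = {\<omega>\<in>space M. X \<omega> \<in> thickening A e} - {\<omega>\<in>space M. X \<omega> \<in> A}" for A
  have E_ev: "E \<in> events" unfolding E_def using X Y by measurable
  have ev: "{\<omega>\<in>space M. X \<omega> \<in> A} \<in> events" "{\<omega>\<in>space M. X \<omega> \<in> thickening A e} \<in> events"
    if "A \<in> sets borel" for A
    using that by (auto intro!: Collect_in_events[OF X] borel_open[OF open_thickening])
  have D_ev: "D A \<in> events" if "A \<in> sets borel" for A
    unfolding D_def using ev[OF that] by auto
  have prob_D: "prob (D A) = prob {\<omega>\<in>space M. X \<omega> \<in> thickening A e} - prob {\<omega>\<in>space M. X \<omega> \<in> A}"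
    if "A \<in> sets borel" for A
    unfolding D_def using ev[OF that] subset_thickening[OF e, of A] by (intro finite_measure_Diff) auto
  have "{\<omega>\<in>space M. (Y \<omega> \<in> Op) \<noteq> (X \<omega> \<in> Op)} \<subseteq> E \<union> D Op \<union> D (- Op)"
  proof
    fix \<omega> assume \<omega>: "\<omega> \<in> {\<omega>\<in>space M. (Y \<omega> \<in> Op) \<noteq> (X \<omega> \<in> Op)}"
    show "\<omega> \<in> E \<union> D Op \<union> D (- Op)"
    proof (cases "e \<le> \<bar>Y \<omega> - X \<omega>\<bar>")
      case False
      then have "dist (Y \<omega>) (X \<omega>) < e" by (simp add: dist_real_def)
      then have "X \<omega> \<in> thickening Op e - Op \<or> X \<omega> \<in> thickening (- Op) e - (- Op)"
        using \<omega> unfolding thickening_def by (cases "Y \<omega> \<in> Op") auto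
      then show ?thesis using \<omega> by (auto simp: D_def)
    qed (use \<omega> in \<open>auto simp: E_def\<close>)
  qed
  then have "prob {\<omega>\<in>space M. (Y \<omega> \<in> Op) \<noteq> (X \<omega> \<in> Op)} \<le> prob (E \<union> D Op \<union> D (- Op))"
    using E_ev D_ev Op by (intro finite_measure_mono) auto
  also have "\<dots> \<le> prob E + prob (D Op) + prob (D (- Op))"
    using E_ev D_ev Op measure_Un_le[of "E \<union> D Op" M "D (- Op)"] measure_Un_le[of E M "D Op"] by auto
  finally show ?thesis
    using prob_D thick Op unfolding E_def by auto
qed

lemma prob_close_at_if_L1_close_at:
  fixes X :: "'a \<Rightarrow> real"
  assumes X: "X \<in> borel_measurable M" and Op: "open Op"
    and null: "prob {\<omega>\<in>space M. X \<omega> \<in> frontier Op} = 0" and L1: "L1_close_at M Z \<pi> X"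
  shows "prob_close_at M Z \<pi> X Op"
  unfolding prob_close_at_def
proof (intro allI impI)
  fix \<eta> :: real assume \<eta>: "0 < \<eta>"
  obtain \<epsilon> where \<epsilon>: "0 < \<epsilon>" "prob {\<omega>\<in>space M. X \<omega> \<in> thickening Op \<epsilon>} \<le> prob {\<omega>\<in>space M. X \<omega> \<in> Op} + \<eta> / 4"
     "prob {\<omega>\<in>space M. X \<omega> \<in> thickening (- Op) \<epsilon>} \<le> prob {\<omega>\<in>space M. X \<omega> \<in> - Op} + \<eta> / 4"
    using prob_thickening_le_null_frontier[OF X Op null, of "\<eta> / 4"] \<eta> by auto
  obtain \<delta> where \<delta>: "0 < \<delta>" "\<forall>Y\<in>Z. \<pi> Y X < \<delta> \<longrightarrow> Y \<in> borel_measurable M \<and>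
       integrable M (\<lambda>\<omega>. \<bar>Y \<omega> - X \<omega>\<bar>) \<and> (\<integral>\<omega>. \<bar>Y \<omega> - X \<omega>\<bar> \<partial>M) \<le> \<epsilon> * (\<eta> / 2)"
    using L1 \<epsilon>(1) \<eta> unfolding L1_close_at_def by (metis divide_pos_pos mult_pos_pos zero_less_numeral)
  have "Y \<in> borel_measurable M \<and> \<bar>prob {\<omega>\<in>space M. Y \<omega> \<in> Op} - prob {\<omega>\<in>space M. X \<omega> \<in> Op}\<bar> \<le> \<eta>"
    if "Y \<in> Z" "\<pi> Y X < \<delta>" for Y
  proof -
    have Y: "Y \<in> borel_measurable M" and int: "integrable M (\<lambda>\<omega>. \<bar>Y \<omega> - X \<omega>\<bar>)"
      and small: "(\<integral>\<omega>. \<bar>Y \<omega> - X \<omega>\<bar> \<partial>M) \<le> \<epsilon> * (\<eta> / 2)"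
      using \<delta>(2) that by auto
    have "prob {\<omega>\<in>space M. \<epsilon> \<le> \<bar>Y \<omega> - X \<omega>\<bar>} \<le> (\<integral>\<omega>. \<bar>Y \<omega> - X \<omega>\<bar> \<partial>M) / \<epsilon>"
      by (rule integral_Markov_inequality_measure[OF int _ _ \<epsilon>(1), of "space M"]) auto
    also have "\<dots> \<le> \<eta> / 2"
      using small \<epsilon>(1) by (simp add: divide_le_eq mult.commute)
    finally have Markov: "prob {\<omega>\<in>space M. \<epsilon> \<le> \<bar>Y \<omega> - X \<omega>\<bar>} \<le> \<eta> / 2" .
    have "\<bar>prob {\<omega>\<in>space M. Y \<omega> \<in> Op} - prob {\<omega>\<in>space M. X \<omega> \<in> Op}\<bar> \<le> prob {\<omega>\<in>space M. (Y \<omega> \<in> Op) \<noteq> (X \<omega> \<in> Op)}"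
      using Op by (intro abs_prob_diff_le_mismatch X Y) auto
    also have "\<dots> \<le> prob {\<omega>\<in>space M. \<epsilon> \<le> \<bar>Y \<omega> - X \<omega>\<bar>} + 2 * (\<eta> / 4)"
      by (rule prob_mismatch_le[OF X Y Op \<epsilon>])
    finally show ?thesis using Markov Y by simp
  qed
  with \<delta>(1) show "\<exists>\<delta>>0. \<forall>Y\<in>Z. \<pi> Y X < \<delta> \<longrightarrow>
      Y \<in> borel_measurable M \<and> \<bar>prob {\<omega>\<in>space M. Y \<omega> \<in> Op} - prob {\<omega>\<in>space M. X \<omega> \<in> Op}\<bar> \<le> \<eta>"
    by blast
qed

lemma prob_le_prob_thickening_if_dist_W_less:
  fixes X Y :: "'a \<Rightarrow> real"
  assumes X: "X \<in> borel_measurable M" and Y: "Y \<in> borel_measurable M"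
    and dist: "dist_W M Y X < r" and A: "A \<in> sets borel"
  shows "\<exists>e. 0 < e \<and> e < r \<and> prob {\<omega>\<in>space M. Y \<omega> \<in> A} \<le> prob {\<omega>\<in>space M. X \<omega> \<in> thickening A e} + e"
proof -
  interpret PY: prob_space "distr M borel Y" by (rule prob_space_distr[OF Y])
  interpret PX: prob_space "distr M borel X" by (rule prob_space_distr[OF X])
  define S where "S = {\<epsilon>. \<epsilon> > 0 \<and> (\<forall>A\<in>sets borel.
    measure (distr M borel Y) A \<le> measure (distr M borel X) (\<Union>a\<in>A. ball a \<epsilon>) + \<epsilon> \<and>
    measure (distr M borel X) A \<le> measure (distr M borel Y) (\<Union>a\<in>A. ball a \<epsilon>) + \<epsilon>)}"
  have "1 \<in> S"
    unfolding S_def using PX.prob_le_1 PY.prob_le_1 by (auto intro: add_increasing)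
  moreover have "bdd_below S" unfolding S_def by (rule bdd_belowI[of _ 0]) auto
  moreover have "Inf S < r"
    using dist unfolding dist_W_def prokhorov_def S_def .
  ultimately obtain e where e: "e \<in> S" "e < r"
    using cInf_less_iff[of S] by blast
  have prob_distr: "measure (distr M borel V) B = prob {\<omega>\<in>space M. V \<omega> \<in> B}"
    if "V \<in> borel_measurable M" "B \<in> sets borel" for V B
    using measure_distr[OF that] by (simp add: vimage_def Int_def conj_commute)
  have "prob {\<omega>\<in>space M. Y \<omega> \<in> A} \<le> prob {\<omega>\<in>space M. X \<omega> \<in> thickening A e} + e"
    using e(1) A prob_distr[OF Y A] prob_distr[OF X borel_open[OF open_thickening]]
    by (auto simp: S_def thickening_def)
  with e S_def show ?thesis by blast
qed

lemma prob_close_at_L0: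
  fixes X :: "'a \<Rightarrow> real"
  assumes X: "X \<in> borel_measurable M" and Op: "open Op"
    and null: "prob {\<omega>\<in>space M. X \<omega> \<in> frontier Op} = 0"
  shows "prob_close_at M (L0 M) (dist_W M) X Op"
  unfolding prob_close_at_def
proof (intro allI impI)
  fix \<eta> :: real assume \<eta>: "0 < \<eta>"
  obtain \<epsilon> where \<epsilon>: "0 < \<epsilon>" "prob {\<omega>\<in>space M. X \<omega> \<in> thickening Op \<epsilon>} \<le> prob {\<omega>\<in>space M. X \<omega> \<in> Op} + \<eta> / 2"
     "prob {\<omega>\<in>space M. X \<omega> \<in> thickening (- Op) \<epsilon>} \<le> prob {\<omega>\<in>space M. X \<omega> \<in> - Op} + \<eta> / 2"
    using prob_thickening_le_null_frontier[OF X Op null, of "\<eta> / 2"] \<eta> by auto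
  have "Y \<in> borel_measurable M \<and> \<bar>prob {\<omega>\<in>space M. Y \<omega> \<in> Op} - prob {\<omega>\<in>space M. X \<omega> \<in> Op}\<bar> \<le> \<eta>"
    if "Y \<in> L0 M" "dist_W M Y X < min \<epsilon> (\<eta> / 2)" for Y
  proof -
    have Y: "Y \<in> borel_measurable M" using that(1) by (simp add: L0_def)
    have up: "prob {\<omega>\<in>space M. Y \<omega> \<in> A} \<le> prob {\<omega>\<in>space M. X \<omega> \<in> thickening A \<epsilon>} + \<eta> / 2"
      if A: "A \<in> sets borel" for A
    proof -
      obtain e where e: "0 < e" "e < min \<epsilon> (\<eta> / 2)"
        "prob {\<omega>\<in>space M. Y \<omega> \<in> A} \<le> prob {\<omega>\<in>space M. X \<omega> \<in> thickening A e} + e"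
        using prob_le_prob_thickening_if_dist_W_less[OF X Y \<open>dist_W M Y X < _\<close> A] by blast
      moreover have "prob {\<omega>\<in>space M. X \<omega> \<in> thickening A e} \<le> prob {\<omega>\<in>space M. X \<omega> \<in> thickening A \<epsilon>}"
        using e(2) thickening_mono[of e \<epsilon> A]
        by (intro finite_measure_mono Collect_in_events[OF X] borel_open[OF open_thickening]) auto
      ultimately show ?thesis by simp
    qed
    have compl: "prob {\<omega>\<in>space M. V \<omega> \<in> - Op} = 1 - prob {\<omega>\<in>space M. V \<omega> \<in> Op}"
      if "V \<in> borel_measurable M" for V
    proof -
      have "{\<omega>\<in>space M. V \<omega> \<in> - Op} = space M - {\<omega>\<in>space M. V \<omega> \<in> Op}" by auto
      then show ?thesis using prob_compl[OF Collect_in_events[OF that]] Op by auto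
    qed
    show ?thesis
      using up[of Op] up[of "- Op"] \<epsilon> compl[OF X] compl[OF Y] Op Y by auto
  qed
  moreover have "0 < min \<epsilon> (\<eta> / 2)" using \<epsilon> \<eta> by simp
  ultimately show "\<exists>\<delta>>0. \<forall>Y\<in>L0 M. dist_W M Y X < \<delta> \<longrightarrow>
      Y \<in> borel_measurable M \<and> \<bar>prob {\<omega>\<in>space M. Y \<omega> \<in> Op} - prob {\<omega>\<in>space M. X \<omega> \<in> Op}\<bar> \<le> \<eta>"
    by blast
qed

lemma prob_close_at_if_space_choice:
  fixes X :: "'a \<Rightarrow> real"
  assumes "space_choice M Z \<pi>" "X \<in> Z" and X: "X \<in> borel_measurable M" and Op: "open Op"
    and null: "prob {\<omega>\<in>space M. X \<omega> \<in> frontier Op} = 0"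
  shows "prob_close_at M Z \<pi> X Op"
proof -
  from assms(1) consider "Lq_choice M Z \<pi>" | "Z = L0 M" "\<pi> = dist_W M"
    unfolding space_choice_def Lq_choice_def by blast
  then show ?thesis
  proof cases
    case 1
    show ?thesis
      using L1_close_at_if_Lq_choice(2)[OF 1 assms(2)] by (rule prob_close_at_if_L1_close_at[OF X Op null])
  qed (use prob_close_at_L0[OF X Op null] in simp)
qed


end

section \<open>Continuity of expected shortfall along layered payoffs\<close>

context prob_space
begin

lemma rockafellar_uryasev_two_point:
  assumes Y: "Y \<in> borel_measurable M" and A: "A \<in> sets borel"
  shows "rockafellar_uryasev M p ((\<lambda>x. a + d * indicator A x) \<circ> Y) \<tau> =
     \<tau> + (max (a - \<tau>) 0 + prob {\<omega>\<in>space M. Y \<omega> \<in> A} * (max (a + d - \<tau>) 0 - max (a - \<tau>) 0)) / (1 - p)"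
proof -
  define S where "S = {\<omega>\<in>space M. Y \<omega> \<in> A}"
  have S: "S \<in> events" unfolding S_def by (rule Collect_in_events[OF Y A])
  have "(\<integral>\<omega>. max (((\<lambda>x. a + d * indicator A x) \<circ> Y) \<omega> - \<tau>) 0 \<partial>M) =
        (\<integral>\<omega>. max (a - \<tau>) 0 + (max (a + d - \<tau>) 0 - max (a - \<tau>) 0) * indicator S \<omega> \<partial>M)"
    by (rule Bochner_Integration.integral_cong) (auto simp: S_def indicator_def)
  also have "\<dots> = max (a - \<tau>) 0 + prob S * (max (a + d - \<tau>) 0 - max (a - \<tau>) 0)"
    using S prob_space by (simp add: less_top[symmetric])
  finally show ?thesis unfolding rockafellar_uryasev_def S_def by simp
qed

lemma rockafellar_uryasev_two_point_le:
  assumes V: "V \<in> borel_measurable M" and W: "W \<in> borel_measurable M" and A: "A \<in> sets borel"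
    and d: "0 \<le> d" and p: "p < 1"
    and close: "\<bar>prob {\<omega>\<in>space M. V \<omega> \<in> A} - prob {\<omega>\<in>space M. W \<omega> \<in> A}\<bar> \<le> \<eta>"
  shows "rockafellar_uryasev M p ((\<lambda>x. a + d * indicator A x) \<circ> V) \<tau> \<le>
    rockafellar_uryasev M p ((\<lambda>x. a + d * indicator A x) \<circ> W) \<tau> + d * \<eta> / (1 - p)"
proof -
  define \<Delta> where "\<Delta> = max (a + d - \<tau>) 0 - max (a - \<tau>) 0"
  have \<Delta>: "0 \<le> \<Delta>" "\<Delta> \<le> d" unfolding \<Delta>_def using d by (auto simp: max_def)
  have "(prob {\<omega>\<in>space M. V \<omega> \<in> A} - prob {\<omega>\<in>space M. W \<omega> \<in> A}) * \<Delta> \<le> \<eta> * d"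
    using close \<Delta> by (intro mult_mono) auto
  then have "(prob {\<omega>\<in>space M. V \<omega> \<in> A} - prob {\<omega>\<in>space M. W \<omega> \<in> A}) * \<Delta> / (1 - p) \<le> d * \<eta> / (1 - p)"
    using p by (simp add: divide_right_mono mult.commute)
  moreover have "(max (a - \<tau>) 0 + prob {\<omega>\<in>space M. V \<omega> \<in> A} * \<Delta>) / (1 - p) =
      (max (a - \<tau>) 0 + prob {\<omega>\<in>space M. W \<omega> \<in> A} * \<Delta>) / (1 - p) +
      (prob {\<omega>\<in>space M. V \<omega> \<in> A} - prob {\<omega>\<in>space M. W \<omega> \<in> A}) * \<Delta> / (1 - p)"
    by (simp add: add_divide_distrib diff_divide_distrib left_diff_distrib)
  ultimately show ?thesis
    unfolding rockafellar_uryasev_two_point[OF V A] rockafellar_uryasev_two_point[OF W A] \<Delta>_def[symmetric]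
    by linarith
qed

lemma ES_two_point_diff_le:
  assumes p: "0 < p" "p < 1" and X: "X \<in> borel_measurable M" and Y: "Y \<in> borel_measurable M"
    and A: "A \<in> sets borel" and d: "0 \<le> d"
    and close: "\<bar>prob {\<omega>\<in>space M. Y \<omega> \<in> A} - prob {\<omega>\<in>space M. X \<omega> \<in> A}\<bar> \<le> \<eta>"
  shows "\<exists>y z. ES M p ((\<lambda>x. a + d * indicator A x) \<circ> Y) = ereal y \<and>
     ES M p ((\<lambda>x. a + d * indicator A x) \<circ> X) = ereal z \<and> \<bar>y - z\<bar> \<le> d * \<eta> / (1 - p)"
proof -
  let ?g = "\<lambda>x. a + d * indicator A x"
  have meas: "?g \<circ> V \<in> borel_measurable M" and pos: "pos_integrable M (?g \<circ> V)"
    if "V \<in> borel_measurable M" for V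
  proof -
    show "?g \<circ> V \<in> borel_measurable M" using that A by measurable
    show "pos_integrable M (?g \<circ> V)"
      unfolding pos_integrable_def
      by (rule integrable_abs_le[where g="\<lambda>_. \<bar>a\<bar> + d"]) (use d that A in \<open>auto simp: indicator_def\<close>)
  qed
  have "ES M p (?g \<circ> Y) \<le> ES M p (?g \<circ> X) + ereal (d * \<eta> / (1 - p))"
    using close p d A by (intro ES_le_ES_add meas pos X Y rockafellar_uryasev_two_point_le)
  moreover have "ES M p (?g \<circ> X) \<le> ES M p (?g \<circ> Y) + ereal (d * \<eta> / (1 - p))"
    using close p d A by (intro ES_le_ES_add meas pos X Y rockafellar_uryasev_two_point_le) (auto simp: abs_minus_commute)
  ultimately show ?thesis
    using ES_eq_rockafellar_uryasev[OF meas[OF Y] p pos[OF Y]] ES_eq_rockafellar_uryasev[OF meas[OF X] p pos[OF X]]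
    by auto
qed

lemma cont_at_wrt_ES_two_point:
  assumes p: "0 < p" "p < 1" and X: "X \<in> borel_measurable M"
    and A: "A \<in> sets borel" and d: "0 \<le> d" and close: "prob_close_at M Z \<pi> X A"
  shows "cont_at_wrt Z \<pi> (\<lambda>Y. ES M p ((\<lambda>x. a + d * indicator A x) \<circ> Y)) X"
proof -
  obtain z where z: "ES M p ((\<lambda>x. a + d * indicator A x) \<circ> X) = ereal z"
    using ES_two_point_diff_le[OF p X X A d, of 0] by auto
  show ?thesis
  proof (rule cont_at_wrt_ereal_realI[where F="\<lambda>Y. ES M p ((\<lambda>x. a + d * indicator A x) \<circ> Y)", OF z])
    fix e :: real assume e: "0 < e"
    define \<eta> where "\<eta> = e / (2 * (d + 1)) * (1 - p)"
    have \<eta>: "0 < \<eta>" unfolding \<eta>_def using e p d by auto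
    have "d * \<eta> / (1 - p) = d / (d + 1) * (e / 2)"
      using p unfolding \<eta>_def by simp
    also have "\<dots> < e"
      using d e by (simp add: divide_less_eq)
    finally have small: "d * \<eta> / (1 - p) < e" .
    obtain \<delta> where \<delta>: "0 < \<delta>" "\<forall>Y\<in>Z. \<pi> Y X < \<delta> \<longrightarrow> Y \<in> borel_measurable M \<and>
        \<bar>prob {\<omega>\<in>space M. Y \<omega> \<in> A} - prob {\<omega>\<in>space M. X \<omega> \<in> A}\<bar> \<le> \<eta>"
      using close \<eta> unfolding prob_close_at_def by blast
    have "\<exists>y. ES M p ((\<lambda>x. a + d * indicator A x) \<circ> Y) = ereal y \<and> \<bar>y - z\<bar> < e"
      if "Y \<in> Z" "\<pi> Y X < \<delta>" for Y
      using ES_two_point_diff_le[OF p X _ A d] \<delta>(2) that z small by fastforce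
    with \<delta>(1) show "\<exists>\<delta>>0. \<forall>Y\<in>Z. \<pi> Y X < \<delta> \<longrightarrow>
        (\<exists>y. ES M p ((\<lambda>x. a + d * indicator A x) \<circ> Y) = ereal y \<and> \<bar>y - z\<bar> < e)"
      by blast
  qed
qed

lemma robust_ES_G_bd:
  fixes X :: "'a \<Rightarrow> real" and \<gamma> :: "real \<Rightarrow> real"
  assumes p: "0 < p" "p < 1" and X: "X \<in> borel_measurable M"
    and \<gamma>: "continuous_on UNIV \<gamma>" "\<forall>x. 0 < \<gamma> x"
      "integrable M (\<lambda>\<omega>. \<gamma> (X \<omega>))" "(\<integral>\<omega>. \<gamma> (X \<omega>) \<partial>M) = 1"
    and x0: "0 \<le> x0" "x0 < m"
    and \<gamma>_cases: "(\<forall>x y. \<gamma> x = \<gamma> y) \<or> (\<forall>c. prob {\<omega>\<in>space M. \<gamma> (X \<omega>) = c} = 0)"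
    and Z: "space_choice M Z \<pi>" "X \<in> Z"
  shows "robust (ES M p) (G_bd M \<gamma> X x0 m) Z \<pi> X"
proof -
  have \<gamma>_meas: "\<gamma> \<in> borel_measurable borel"
    using \<gamma>(1) by (rule borel_measurable_continuous_onI)
  have "\<exists>t c s. 0 \<le> t \<and> 0 \<le> s \<and> s \<le> 1 \<and> prob {\<omega>\<in>space M. \<gamma> (X \<omega>) = c} = 0 \<and>
      layered (\<lambda>_. m) \<gamma> t c s \<in> optimal_set (ES M p) (G_between M \<gamma> X x0 (\<lambda>_. m)) X"
    using x0 \<gamma>(3,4) \<gamma>_cases by (intro exists_optimal_layered[OF p X \<gamma>_meas \<gamma>(2)]) simp_all
  then obtain t c s where s: "0 \<le> s" and null: "prob {\<omega>\<in>space M. \<gamma> (X \<omega>) = c} = 0"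
    and opt: "layered (\<lambda>_. m) \<gamma> t c s \<in> optimal_set (ES M p) (G_bd M \<gamma> X x0 m) X"
    unfolding G_bd_eq_G_between by blast
  have layered_eq: "layered (\<lambda>_. m) \<gamma> t c s = (\<lambda>x. min m t + s * max (m - t) 0 * indicator {x. c < \<gamma> x} x)"
    by (auto simp: layered_def indicator_def fun_eq_iff)
  note superlevel = superlevel_open_null_frontier[OF X \<gamma>(1) null]
  have "cont_at_wrt Z \<pi> (\<lambda>Y. ES M p (layered (\<lambda>_. m) \<gamma> t c s \<circ> Y)) X"
    unfolding layered_eq using superlevel s
    by (intro cont_at_wrt_ES_two_point p X prob_close_at_if_space_choice[OF Z X]) auto
  with opt show ?thesis
    unfolding robust_def by blast
qed

end

lemma layered_id_diff_le:
  fixes x y t s :: real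
  assumes t: "0 \<le> t" and s: "0 \<le> s" "s \<le> 1"
  shows "\<bar>layered (\<lambda>x. x) \<gamma> t c s y - layered (\<lambda>x. x) \<gamma> t c s x\<bar>
     \<le> 2 * \<bar>y - x\<bar> + (if (c < \<gamma> y) \<noteq> (c < \<gamma> x) then \<bar>x\<bar> else 0)"
proof -
  define ey ex where "ey = max (y - t) 0" and "ex = max (x - t) 0"
  define iy ix :: real where "iy = indicator {c<..} (\<gamma> y)" and "ix = indicator {c<..} (\<gamma> x)"
  have min: "\<bar>min y t - min x t\<bar> \<le> \<bar>y - x\<bar>" by (auto simp: min_def)
  have excess: "\<bar>ey - ex\<bar> \<le> \<bar>y - x\<bar>" "0 \<le> ex" "ex \<le> \<bar>x\<bar>" "0 \<le> ey"
    using t by (auto simp: ey_def ex_def max_def)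
  have "\<bar>ey * iy - ex * ix\<bar> \<le> \<bar>y - x\<bar> + (if (c < \<gamma> y) \<noteq> (c < \<gamma> x) then \<bar>x\<bar> else 0)"
    using excess by (cases "c < \<gamma> y"; cases "c < \<gamma> x") (auto simp: iy_def ix_def)
  moreover have "\<bar>s * (ey * iy - ex * ix)\<bar> \<le> \<bar>ey * iy - ex * ix\<bar>"
    using s by (simp add: abs_mult mult_left_le_one_le)
  moreover have "layered (\<lambda>x. x) \<gamma> t c s y - layered (\<lambda>x. x) \<gamma> t c s x = (min y t - min x t) + s * (ey * iy - ex * ix)"
    by (simp add: layered_def ey_def ex_def iy_def ix_def algebra_simps)
  ultimately show ?thesis
    using min abs_triangle_ineq[of "min y t - min x t" "s * (ey * iy - ex * ix)"] by simp
qed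

lemma abs_layered_id_le:
  fixes x t s :: real
  assumes t: "0 \<le> t" and s: "0 \<le> s" "s \<le> 1"
  shows "\<bar>layered (\<lambda>x. x) \<gamma> t c s x\<bar> \<le> \<bar>x\<bar>"
proof (cases "x \<le> t")
  case False
  then have "0 \<le> x - t" by simp
  note bounds = scaled_indicator_bounds[OF this s, of "{c<..}" "\<gamma> x"]
  have "layered (\<lambda>x. x) \<gamma> t c s x = t + s * (x - t) * indicator {c<..} (\<gamma> x)"
    using False by (simp add: layered_def)
  with bounds t have "0 \<le> layered (\<lambda>x. x) \<gamma> t c s x" "layered (\<lambda>x. x) \<gamma> t c s x \<le> x"
    by linarith+
  then show ?thesis by simp
qed (simp add: layered_def)

context prob_space
begin

lemma integral_abs_indicator_small:
  fixes X :: "'a \<Rightarrow> real"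
  assumes X: "integrable M X" and e: "0 < e"
  shows "\<exists>\<kappa>>0. \<forall>B\<in>events. prob B \<le> \<kappa> \<longrightarrow> (\<integral>\<omega>. \<bar>X \<omega>\<bar> * indicator B \<omega> \<partial>M) \<le> e"
proof -
  define S where "S n = {\<omega>\<in>space M. real n < \<bar>X \<omega>\<bar>}" for n :: nat
  have S: "S n \<in> events" for n
    unfolding S_def using X by measurable
  have int: "integrable M (\<lambda>\<omega>. \<bar>X \<omega>\<bar> * indicator B \<omega>)" if "B \<in> events" for B
    using that X by (intro integrable_abs_le[OF integrable_abs[OF X]]) (auto simp: indicator_def)
  have "(\<lambda>n. \<integral>\<omega>. \<bar>X \<omega>\<bar> * indicator (S n) \<omega> \<partial>M) \<longlonglongrightarrow> (\<integral>\<omega>. 0 \<partial>M)"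
  proof (rule integral_dominated_convergence[where w="\<lambda>\<omega>. \<bar>X \<omega>\<bar>"])
    show "AE \<omega> in M. (\<lambda>n. \<bar>X \<omega>\<bar> * indicator (S n) \<omega>) \<longlonglongrightarrow> 0"
    proof (rule AE_I2)
      fix \<omega>
      obtain N where "\<bar>X \<omega>\<bar> < real N" using reals_Archimedean2 by blast
      then have "eventually (\<lambda>n. \<bar>X \<omega>\<bar> * indicator (S n) \<omega> = 0) sequentially"
        unfolding eventually_sequentially by (auto simp: S_def indicator_def intro!: exI[of _ N])
      then show "(\<lambda>n. \<bar>X \<omega>\<bar> * indicator (S n) \<omega>) \<longlonglongrightarrow> 0"
        by (rule tendsto_eventually)
    qed
  qed (use X S in \<open>auto simp: indicator_def\<close>)
  then have "eventually (\<lambda>n. (\<integral>\<omega>. \<bar>X \<omega>\<bar> * indicator (S n) \<omega> \<partial>M) < e / 2) sequentially"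
    using e by (intro order_tendstoD(2)) auto
  then obtain n where n: "(\<integral>\<omega>. \<bar>X \<omega>\<bar> * indicator (S n) \<omega> \<partial>M) < e / 2"
    by (auto simp: eventually_sequentially)
  define \<kappa> where "\<kappa> = e / (2 * (real n + 1))"
  have "(\<integral>\<omega>. \<bar>X \<omega>\<bar> * indicator B \<omega> \<partial>M) \<le> e" if B: "B \<in> events" "prob B \<le> \<kappa>" for B
  proof -
    have int2: "integrable M (\<lambda>\<omega>. real n * indicator B \<omega>)"
      using B by (intro integrable_mult_right) (auto simp: less_top[symmetric])
    have "(\<integral>\<omega>. \<bar>X \<omega>\<bar> * indicator B \<omega> \<partial>M) \<le> (\<integral>\<omega>. real n * indicator B \<omega> + \<bar>X \<omega>\<bar> * indicator (S n) \<omega> \<partial>M)"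
      by (intro integral_mono int B Bochner_Integration.integrable_add int2 S) (auto simp: indicator_def S_def)
    also have "\<dots> = real n * prob B + (\<integral>\<omega>. \<bar>X \<omega>\<bar> * indicator (S n) \<omega> \<partial>M)"
      using int[OF S] int2 B(1) by (simp add: Int_absorb2 sets.sets_into_space)
    also have "real n * prob B \<le> (real n + 1) * \<kappa>"
      using B(2) by (intro mult_mono) (auto simp: \<kappa>_def e less_imp_le)
    also have "(real n + 1) * \<kappa> = e / 2"
      by (simp add: \<kappa>_def field_simps)
    finally show ?thesis using n by simp
  qed
  moreover have "0 < \<kappa>" using e by (simp add: \<kappa>_def)
  ultimately show ?thesis by blast
qed

lemma pos_integrable_if_integrable_abs_diff:
  fixes A B :: "'a \<Rightarrow> real"
  assumes A: "A \<in> borel_measurable M" and B: "pos_integrable M B"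
    and int: "integrable M (\<lambda>\<omega>. \<bar>A \<omega> - B \<omega>\<bar>)"
  shows "pos_integrable M A"
  unfolding pos_integrable_def
  by (rule integrable_abs_le[where g="\<lambda>\<omega>. max (B \<omega>) 0 + \<bar>A \<omega> - B \<omega>\<bar>"])
    (use A B int in \<open>auto simp: pos_integrable_def max_def\<close>)

lemma rockafellar_uryasev_le_add_integral_abs:
  fixes A B :: "'a \<Rightarrow> real"
  assumes A: "A \<in> borel_measurable M" and B: "B \<in> borel_measurable M" "pos_integrable M B"
    and int: "integrable M (\<lambda>\<omega>. \<bar>A \<omega> - B \<omega>\<bar>)" and p: "p < 1"
  shows "rockafellar_uryasev M p A \<tau> \<le> rockafellar_uryasev M p B \<tau> + (\<integral>\<omega>. \<bar>A \<omega> - B \<omega>\<bar> \<partial>M) / (1 - p)"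
proof -
  have int_B: "integrable M (\<lambda>\<omega>. max (B \<omega> - \<tau>) 0)"
    using B pos_integrable_iff by blast
  have int_A: "integrable M (\<lambda>\<omega>. max (A \<omega> - \<tau>) 0)"
    using pos_integrable_if_integrable_abs_diff[OF A B(2) int] A pos_integrable_iff by blast
  have "(\<integral>\<omega>. max (A \<omega> - \<tau>) 0 \<partial>M) \<le> (\<integral>\<omega>. max (B \<omega> - \<tau>) 0 + \<bar>A \<omega> - B \<omega>\<bar> \<partial>M)"
    using int_B int by (intro integral_mono[OF int_A]) (auto simp: max_def)
  also have "\<dots> = (\<integral>\<omega>. max (B \<omega> - \<tau>) 0 \<partial>M) + (\<integral>\<omega>. \<bar>A \<omega> - B \<omega>\<bar> \<partial>M)"
    using int_B int by simp
  finally show ?thesis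
    using p by (simp add: rockafellar_uryasev_def add_divide_distrib[symmetric] divide_right_mono)
qed

lemma ES_diff_le_integral_abs:
  fixes A B :: "'a \<Rightarrow> real"
  assumes p: "0 < p" "p < 1" and A: "A \<in> borel_measurable M" and B: "B \<in> borel_measurable M" "pos_integrable M B"
    and int: "integrable M (\<lambda>\<omega>. \<bar>A \<omega> - B \<omega>\<bar>)"
  shows "\<exists>a b. ES M p A = ereal a \<and> ES M p B = ereal b \<and> \<bar>a - b\<bar> \<le> (\<integral>\<omega>. \<bar>A \<omega> - B \<omega>\<bar> \<partial>M) / (1 - p)"
proof -
  have pos_A: "pos_integrable M A"
    by (rule pos_integrable_if_integrable_abs_diff[OF A B(2) int])
  have int': "integrable M (\<lambda>\<omega>. \<bar>B \<omega> - A \<omega>\<bar>)" and eq: "(\<lambda>\<omega>. \<bar>B \<omega> - A \<omega>\<bar>) = (\<lambda>\<omega>. \<bar>A \<omega> - B \<omega>\<bar>)"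
    using int by (simp_all add: abs_minus_commute)
  have "ES M p A \<le> ES M p B + ereal ((\<integral>\<omega>. \<bar>A \<omega> - B \<omega>\<bar> \<partial>M) / (1 - p))"
    using p by (intro ES_le_ES_add A pos_A B rockafellar_uryasev_le_add_integral_abs int)
  moreover have "ES M p B \<le> ES M p A + ereal ((\<integral>\<omega>. \<bar>A \<omega> - B \<omega>\<bar> \<partial>M) / (1 - p))"
    using rockafellar_uryasev_le_add_integral_abs[OF B(1) A pos_A int' p(2)] unfolding eq
    by (intro ES_le_ES_add A pos_A B p)
  ultimately show ?thesis
    using ES_eq_rockafellar_uryasev[OF A p pos_A] ES_eq_rockafellar_uryasev[OF B(1) p B(2)] by auto
qed

lemma integral_layered_id_diff_le:
  fixes X Y :: "'a \<Rightarrow> real" and \<gamma> :: "real \<Rightarrow> real" and t c s :: real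
  assumes X: "X \<in> borel_measurable M" "integrable M X" and Y: "Y \<in> borel_measurable M"
    and int: "integrable M (\<lambda>\<omega>. \<bar>Y \<omega> - X \<omega>\<bar>)" and \<gamma>: "\<gamma> \<in> borel_measurable borel"
    and t: "0 \<le> t" and s: "0 \<le> s" "s \<le> 1"
  defines "g \<equiv> layered (\<lambda>x. x) \<gamma> t c s"
    and "mismatch \<equiv> {\<omega>\<in>space M. (c < \<gamma> (Y \<omega>)) \<noteq> (c < \<gamma> (X \<omega>))}"
  shows "integrable M (\<lambda>\<omega>. \<bar>g (Y \<omega>) - g (X \<omega>)\<bar>)"
    "(\<integral>\<omega>. \<bar>g (Y \<omega>) - g (X \<omega>)\<bar> \<partial>M) \<le> 2 * (\<integral>\<omega>. \<bar>Y \<omega> - X \<omega>\<bar> \<partial>M) + (\<integral>\<omega>. \<bar>X \<omega>\<bar> * indicator mismatch \<omega> \<partial>M)"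
proof -
  have mismatch: "mismatch \<in> events"
    unfolding mismatch_def using X(1) Y \<gamma> by measurable
  have int_mis: "integrable M (\<lambda>\<omega>. \<bar>X \<omega>\<bar> * indicator mismatch \<omega>)"
    using mismatch X by (intro integrable_abs_le[OF integrable_abs[OF X(2)]]) (auto simp: indicator_def)
  have bound: "integrable M (\<lambda>\<omega>. 2 * \<bar>Y \<omega> - X \<omega>\<bar> + \<bar>X \<omega>\<bar> * indicator mismatch \<omega>)"
    using int int_mis by simp
  have le: "AE \<omega> in M. \<bar>g (Y \<omega>) - g (X \<omega>)\<bar> \<le> 2 * \<bar>Y \<omega> - X \<omega>\<bar> + \<bar>X \<omega>\<bar> * indicator mismatch \<omega>"
  proof (rule AE_I2)
    fix \<omega> assume "\<omega> \<in> space M"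
    then show "\<bar>g (Y \<omega>) - g (X \<omega>)\<bar> \<le> 2 * \<bar>Y \<omega> - X \<omega>\<bar> + \<bar>X \<omega>\<bar> * indicator mismatch \<omega>"
      using layered_id_diff_le[OF t s, of \<gamma> c "Y \<omega>" "X \<omega>"]
      by (simp add: g_def mismatch_def indicator_def split: if_splits)
  qed
  have meas: "(\<lambda>\<omega>. \<bar>g (Y \<omega>) - g (X \<omega>)\<bar>) \<in> borel_measurable M"
    unfolding g_def layered_def using X(1) Y \<gamma> by measurable
  show int_g: "integrable M (\<lambda>\<omega>. \<bar>g (Y \<omega>) - g (X \<omega>)\<bar>)"
    by (rule integrable_abs_le[OF bound meas]) (use le in auto)
  have "(\<integral>\<omega>. \<bar>g (Y \<omega>) - g (X \<omega>)\<bar> \<partial>M) \<le> (\<integral>\<omega>. 2 * \<bar>Y \<omega> - X \<omega>\<bar> + \<bar>X \<omega>\<bar> * indicator mismatch \<omega> \<partial>M)"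
    by (rule integral_mono_AE[OF int_g bound le])
  also have "\<dots> = 2 * (\<integral>\<omega>. \<bar>Y \<omega> - X \<omega>\<bar> \<partial>M) + (\<integral>\<omega>. \<bar>X \<omega>\<bar> * indicator mismatch \<omega> \<partial>M)"
    using int int_mis by simp
  finally show "(\<integral>\<omega>. \<bar>g (Y \<omega>) - g (X \<omega>)\<bar> \<partial>M) \<le> 2 * (\<integral>\<omega>. \<bar>Y \<omega> - X \<omega>\<bar> \<partial>M) + (\<integral>\<omega>. \<bar>X \<omega>\<bar> * indicator mismatch \<omega> \<partial>M)" .
qed

lemma cont_at_wrt_ES_if_L1_close:
  fixes F :: "('a \<Rightarrow> real) \<Rightarrow> 'a \<Rightarrow> real"
  assumes p: "0 < p" "p < 1" and FX: "F X \<in> borel_measurable M" "pos_integrable M (F X)"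
    and close: "\<And>e. 0 < e \<Longrightarrow> \<exists>\<delta>>0. \<forall>Y\<in>Z. \<pi> Y X < \<delta> \<longrightarrow> F Y \<in> borel_measurable M \<and>
      integrable M (\<lambda>\<omega>. \<bar>F Y \<omega> - F X \<omega>\<bar>) \<and> (\<integral>\<omega>. \<bar>F Y \<omega> - F X \<omega>\<bar> \<partial>M) \<le> e"
  shows "cont_at_wrt Z \<pi> (\<lambda>Y. ES M p (F Y)) X"
proof -
  obtain z where z: "ES M p (F X) = ereal z"
    using ES_eq_rockafellar_uryasev[OF FX(1) p FX(2)] by blast
  show ?thesis
  proof (rule cont_at_wrt_ereal_realI[where F="\<lambda>Y. ES M p (F Y)", OF z])
    fix e :: real assume e: "0 < e"
    then obtain \<delta> where \<delta>: "0 < \<delta>" "\<forall>Y\<in>Z. \<pi> Y X < \<delta> \<longrightarrow> F Y \<in> borel_measurable M \<and>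
      integrable M (\<lambda>\<omega>. \<bar>F Y \<omega> - F X \<omega>\<bar>) \<and> (\<integral>\<omega>. \<bar>F Y \<omega> - F X \<omega>\<bar> \<partial>M) \<le> e / 2 * (1 - p)"
      using close[of "e / 2 * (1 - p)"] p by auto
    have "\<exists>y. ES M p (F Y) = ereal y \<and> \<bar>y - z\<bar> < e" if Y: "Y \<in> Z" "\<pi> Y X < \<delta>" for Y
    proof -
      have FY: "F Y \<in> borel_measurable M" "integrable M (\<lambda>\<omega>. \<bar>F Y \<omega> - F X \<omega>\<bar>)"
        "(\<integral>\<omega>. \<bar>F Y \<omega> - F X \<omega>\<bar> \<partial>M) \<le> e / 2 * (1 - p)"
        using \<delta>(2) Y by auto
      obtain y z' where y: "ES M p (F Y) = ereal y" "ES M p (F X) = ereal z'"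
        "\<bar>y - z'\<bar> \<le> (\<integral>\<omega>. \<bar>F Y \<omega> - F X \<omega>\<bar> \<partial>M) / (1 - p)"
        using ES_diff_le_integral_abs[OF p FY(1) FX FY(2)] by blast
      have "(\<integral>\<omega>. \<bar>F Y \<omega> - F X \<omega>\<bar> \<partial>M) / (1 - p) \<le> e / 2 * (1 - p) / (1 - p)"
        using p by (intro divide_right_mono FY(3)) simp
      also have "\<dots> = e / 2"
        using p by (subst nonzero_mult_div_cancel_right) auto
      also have "\<dots> < e"
        using e by simp
      finally show ?thesis
        using y z by auto
    qed
    with \<delta>(1) show "\<exists>\<delta>>0. \<forall>Y\<in>Z. \<pi> Y X < \<delta> \<longrightarrow> (\<exists>y. ES M p (F Y) = ereal y \<and> \<bar>y - z\<bar> < e)"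
      by blast
  qed
qed

lemma L1_close_layered_id:
  fixes X :: "'a \<Rightarrow> real" and \<gamma> :: "real \<Rightarrow> real"
  assumes X: "X \<in> borel_measurable M" "integrable M X"
    and t: "0 \<le> t" and s: "0 \<le> s" "s \<le> 1"
    and \<gamma>: "continuous_on UNIV \<gamma>" and null: "prob {\<omega>\<in>space M. \<gamma> (X \<omega>) = c} = 0"
    and L1: "L1_close_at M Z \<pi> X" and e: "0 < e"
  defines "g \<equiv> layered (\<lambda>x. x) \<gamma> t c s"
  shows "\<exists>\<delta>>0. \<forall>Y\<in>Z. \<pi> Y X < \<delta> \<longrightarrow> g \<circ> Y \<in> borel_measurable M \<and>
    integrable M (\<lambda>\<omega>. \<bar>(g \<circ> Y) \<omega> - (g \<circ> X) \<omega>\<bar>) \<and> (\<integral>\<omega>. \<bar>(g \<circ> Y) \<omega> - (g \<circ> X) \<omega>\<bar> \<partial>M) \<le> e"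
proof -
  let ?Op = "{x. c < \<gamma> x}"
  have \<gamma>_meas: "\<gamma> \<in> borel_measurable borel"
    using \<gamma> by (rule borel_measurable_continuous_onI)
  note Op = superlevel_open_null_frontier[OF X(1) \<gamma> null]
  obtain \<kappa> where \<kappa>: "0 < \<kappa>" "\<forall>B\<in>events. prob B \<le> \<kappa> \<longrightarrow> (\<integral>\<omega>. \<bar>X \<omega>\<bar> * indicator B \<omega> \<partial>M) \<le> e / 2"
    using integral_abs_indicator_small[OF X(2), of "e / 2"] e by auto
  obtain \<epsilon> where \<epsilon>: "0 < \<epsilon>" "prob {\<omega>\<in>space M. X \<omega> \<in> thickening ?Op \<epsilon>} \<le> prob {\<omega>\<in>space M. X \<omega> \<in> ?Op} + \<kappa> / 4"
     "prob {\<omega>\<in>space M. X \<omega> \<in> thickening (- ?Op) \<epsilon>} \<le> prob {\<omega>\<in>space M. X \<omega> \<in> - ?Op} + \<kappa> / 4"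
    using prob_thickening_le_null_frontier[OF X(1) Op, of "\<kappa> / 4"] \<kappa> by auto
  obtain \<delta> where \<delta>: "0 < \<delta>" "\<forall>Y\<in>Z. \<pi> Y X < \<delta> \<longrightarrow> Y \<in> borel_measurable M \<and>
     integrable M (\<lambda>\<omega>. \<bar>Y \<omega> - X \<omega>\<bar>) \<and> (\<integral>\<omega>. \<bar>Y \<omega> - X \<omega>\<bar> \<partial>M) \<le> min (\<epsilon> * (\<kappa> / 2)) (e / 4)"
  proof -
    have "0 < min (\<epsilon> * (\<kappa> / 2)) (e / 4)" using \<epsilon>(1) \<kappa>(1) e by simp
    then show ?thesis using L1 that unfolding L1_close_at_def by blast
  qed
  have "g \<circ> Y \<in> borel_measurable M \<and> integrable M (\<lambda>\<omega>. \<bar>(g \<circ> Y) \<omega> - (g \<circ> X) \<omega>\<bar>) \<and>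
      (\<integral>\<omega>. \<bar>(g \<circ> Y) \<omega> - (g \<circ> X) \<omega>\<bar> \<partial>M) \<le> e" if "Y \<in> Z" "\<pi> Y X < \<delta>" for Y
  proof -
    define mismatch where "mismatch = {\<omega>\<in>space M. (c < \<gamma> (Y \<omega>)) \<noteq> (c < \<gamma> (X \<omega>))}"
    have Y: "Y \<in> borel_measurable M" and int: "integrable M (\<lambda>\<omega>. \<bar>Y \<omega> - X \<omega>\<bar>)"
      and small: "(\<integral>\<omega>. \<bar>Y \<omega> - X \<omega>\<bar> \<partial>M) \<le> min (\<epsilon> * (\<kappa> / 2)) (e / 4)"
      using \<delta>(2) that by auto
    have "prob {\<omega>\<in>space M. \<epsilon> \<le> \<bar>Y \<omega> - X \<omega>\<bar>} \<le> (\<integral>\<omega>. \<bar>Y \<omega> - X \<omega>\<bar> \<partial>M) / \<epsilon>"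
      by (rule integral_Markov_inequality_measure[OF int _ _ \<epsilon>(1), of "space M"]) auto
    also have "\<dots> \<le> \<kappa> / 2"
      using small \<epsilon>(1) by (simp add: divide_le_eq mult.commute)
    finally have "prob mismatch \<le> \<kappa>"
      using prob_mismatch_le[OF X(1) Y Op(1) \<epsilon>] by (simp add: mismatch_def)
    moreover have "mismatch \<in> events"
      unfolding mismatch_def using X(1) Y \<gamma>_meas by measurable
    ultimately have "(\<integral>\<omega>. \<bar>X \<omega>\<bar> * indicator mismatch \<omega> \<partial>M) \<le> e / 2"
      using \<kappa>(2) by blast
    then have "(\<integral>\<omega>. \<bar>g (Y \<omega>) - g (X \<omega>)\<bar> \<partial>M) \<le> e"
      using integral_layered_id_diff_le(2)[OF X Y int \<gamma>_meas t s, of c] small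
      unfolding mismatch_def g_def by linarith
    moreover have "g \<circ> Y \<in> borel_measurable M"
      unfolding g_def layered_def using Y \<gamma>_meas by measurable
    ultimately show ?thesis
      using integral_layered_id_diff_le(1)[OF X Y int \<gamma>_meas t s, of c] by (simp add: g_def)
  qed
  with \<delta>(1) show ?thesis by blast
qed

lemma cont_at_wrt_ES_layered_id:
  fixes X :: "'a \<Rightarrow> real" and \<gamma> :: "real \<Rightarrow> real"
  assumes p: "0 < p" "p < 1" and X: "X \<in> borel_measurable M" "integrable M X"
    and t: "0 \<le> t" and s: "0 \<le> s" "s \<le> 1"
    and \<gamma>: "continuous_on UNIV \<gamma>" and null: "prob {\<omega>\<in>space M. \<gamma> (X \<omega>) = c} = 0"
    and L1: "L1_close_at M Z \<pi> X"
  shows "cont_at_wrt Z \<pi> (\<lambda>Y. ES M p (layered (\<lambda>x. x) \<gamma> t c s \<circ> Y)) X"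
proof (rule cont_at_wrt_ES_if_L1_close[OF p])
  let ?g = "layered (\<lambda>x. x) \<gamma> t c s"
  show X_meas: "?g \<circ> X \<in> borel_measurable M"
    unfolding layered_def using X(1) borel_measurable_continuous_onI[OF \<gamma>] by measurable
  show "pos_integrable M (?g \<circ> X)"
    unfolding pos_integrable_def
  proof (rule integrable_abs_le[OF integrable_abs[OF X(2)]])
    show "(\<lambda>\<omega>. max ((?g \<circ> X) \<omega>) 0) \<in> borel_measurable M"
      using X_meas unfolding comp_def by (intro borel_measurable_max) auto
    show "AE \<omega> in M. \<bar>max ((?g \<circ> X) \<omega>) 0\<bar> \<le> \<bar>X \<omega>\<bar>"
    proof (rule AE_I2)
      fix \<omega>
      show "\<bar>max ((?g \<circ> X) \<omega>) 0\<bar> \<le> \<bar>X \<omega>\<bar>"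
        using abs_layered_id_le[OF t s, of \<gamma> c "X \<omega>"] by (auto simp: max_def)
    qed
  qed
qed (rule L1_close_layered_id[OF X t s \<gamma> null L1])

lemma robust_ES_G_ns:
  fixes X :: "'a \<Rightarrow> real" and \<gamma> :: "real \<Rightarrow> real"
  assumes p: "0 < p" "p < 1" and X: "X \<in> borel_measurable M" "\<forall>\<omega>\<in>space M. 0 \<le> X \<omega>"
    and \<gamma>: "continuous_on UNIV \<gamma>" "\<forall>x. 0 < \<gamma> x"
      "integrable M (\<lambda>\<omega>. \<gamma> (X \<omega>))" "(\<integral>\<omega>. \<gamma> (X \<omega>) \<partial>M) = 1"
    and \<gamma>X: "integrable M (\<lambda>\<omega>. \<gamma> (X \<omega>) * X \<omega>)" and x0: "x0 \<le> (\<integral>\<omega>. \<gamma> (X \<omega>) * X \<omega> \<partial>M)"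
    and \<gamma>_cases: "(\<forall>x y. \<gamma> x = \<gamma> y) \<or> (\<forall>c. prob {\<omega>\<in>space M. \<gamma> (X \<omega>) = c} = 0)"
    and Z: "Lq_choice M Z \<pi>" "X \<in> Z"
  shows "robust (ES M p) (G_ns M \<gamma> X x0) Z \<pi> X"
proof -
  have \<gamma>_meas: "\<gamma> \<in> borel_measurable borel"
    using \<gamma>(1) by (rule borel_measurable_continuous_onI)
  note X_int = L1_close_at_if_Lq_choice(1)[OF Z]
  have "\<exists>t c s. 0 \<le> t \<and> 0 \<le> s \<and> s \<le> 1 \<and> prob {\<omega>\<in>space M. \<gamma> (X \<omega>) = c} = 0 \<and>
      layered (\<lambda>x. x) \<gamma> t c s \<in> optimal_set (ES M p) (G_between M \<gamma> X x0 (\<lambda>x. x)) X"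
    using X(2) X_int \<gamma>X x0 \<gamma>_cases by (intro exists_optimal_layered[OF p X(1) \<gamma>_meas \<gamma>(2)]) simp_all
  then obtain t c s where tcs: "0 \<le> t" "0 \<le> s" "s \<le> 1" "prob {\<omega>\<in>space M. \<gamma> (X \<omega>) = c} = 0"
    and opt: "layered (\<lambda>x. x) \<gamma> t c s \<in> optimal_set (ES M p) (G_ns M \<gamma> X x0) X"
    unfolding G_ns_eq_G_between by blast
  have "cont_at_wrt Z \<pi> (\<lambda>Y. ES M p (layered (\<lambda>x. x) \<gamma> t c s \<circ> Y)) X"
    by (rule cont_at_wrt_ES_layered_id[OF p X(1) X_int tcs(1-3) \<gamma>(1) tcs(4) L1_close_at_if_Lq_choice(2)[OF Z]])
  with opt show ?thesis
    unfolding robust_def by blast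
qed

end

theorem theorem2:
  fixes M :: "'a measure" and X :: "'a \<Rightarrow> real" and \<gamma> :: "real \<Rightarrow> real"
    and p x0 m :: real
  assumes prob: "prob_space M" and atoml: "atomless M"
    and p: "0 < p" "p < 1"
    and X_meas: "X \<in> borel_measurable M"
    and X_nonneg: "\<forall>\<omega>\<in>space M. X \<omega> \<ge> 0"
    and X_dens: "pos_density_on_support M X"
    and \<gamma>_cont: "continuous_on UNIV \<gamma>"
    and \<gamma>_pos: "\<forall>x. \<gamma> x > 0"
    and \<gamma>_int: "integrable M (\<lambda>\<omega>. \<gamma> (X \<omega>))"
    and \<gamma>_mean: "(\<integral>\<omega>. \<gamma> (X \<omega>) \<partial>M) = 1"
    and \<gamma>X_int: "integrable M (\<lambda>\<omega>. \<gamma> (X \<omega>) * X \<omega>)"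
    and m_pos: "m > 0"
  shows
    "(esssup M (\<lambda>\<omega>. ereal (\<gamma> (X \<omega>))) \<le> ereal (1 / (1 - p)) \<longrightarrow>
        (\<forall>Z \<pi>. space_choice M Z \<pi> \<and> X \<in> Z \<longrightarrow>
           robust (ES M p) (G_cm M \<gamma> X x0) Z \<pi> X))
   \<and> (0 \<le> x0 \<and> x0 < (\<integral>\<omega>. \<gamma> (X \<omega>) * X \<omega> \<partial>M) \<and>
      ((\<forall>x y. \<gamma> x = \<gamma> y) \<or>
       (continuous_on UNIV \<gamma> \<and> (\<forall>t. measure M {\<omega>\<in>space M. \<gamma> (X \<omega>) = t} = 0))) \<longrightarrow>
        (\<forall>Z \<pi>. Lq_choice M Z \<pi> \<and> X \<in> Z \<longrightarrow>
           robust (ES M p) (G_ns M \<gamma> X x0) Z \<pi> X))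
   \<and> (0 \<le> x0 \<and> x0 < m \<and>
      ((\<forall>x y. \<gamma> x = \<gamma> y) \<or>
       (continuous_on UNIV \<gamma> \<and> (\<forall>t. measure M {\<omega>\<in>space M. \<gamma> (X \<omega>) = t} = 0))) \<longrightarrow>
        (\<forall>Z \<pi>. space_choice M Z \<pi> \<and> X \<in> Z \<longrightarrow>
           robust (ES M p) (G_bd M \<gamma> X x0 m) Z \<pi> X))"
proof -
  interpret prob_space M by (rule prob)
  have \<gamma>_meas: "\<gamma> \<in> borel_measurable borel"
    using \<gamma>_cont by (rule borel_measurable_continuous_onI)
  have \<gamma>_cases: "(\<forall>x y. \<gamma> x = \<gamma> y) \<or> (\<forall>c. prob {\<omega>\<in>space M. \<gamma> (X \<omega>) = c} = 0)"
    if "(\<forall>x y. \<gamma> x = \<gamma> y) \<or> (continuous_on UNIV \<gamma> \<and> (\<forall>t. measure M {\<omega>\<in>space M. \<gamma> (X \<omega>) = t} = 0))"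
    using that by blast
  show ?thesis
    using robust_ES_G_cm[OF p X_meas \<gamma>_meas \<gamma>_pos \<gamma>_int \<gamma>_mean]
      robust_ES_G_ns[OF p X_meas X_nonneg \<gamma>_cont \<gamma>_pos \<gamma>_int \<gamma>_mean \<gamma>X_int]
      robust_ES_G_bd[OF p X_meas \<gamma>_cont \<gamma>_pos \<gamma>_int \<gamma>_mean]
      \<gamma>_cases
    by auto
qed

end
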